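(* Let $\Lambda\subset\mathbb B_d$ be an interpolating sequence and let $\kappa$ be a non-negative integer. Let $\mathfrak a\subset\mathcal M_d$ be an ideal such that $\mathfrak a\supset\mathfrak v_\kappa(\Lambda)$. Then for every $z\in\mathcal Z_{\mathbb B_d}(\mathfrak a)$, the polynomial order of $\mathfrak a$ at $z$ is at most $\kappa$.
   Context: $\mathbb B_d$ is the open unit ball of $\mathbb C^d$; $\mathcal M_d$ is the multiplier algebra of the Drury–Arveson space $H^2_d$ (RKHS on $\mathbb B_d$ with kernel $(1-\langle z,w\rangle)^{-1}$). $\Lambda$ is interpolating if every bounded function on $\Lambda$ is the restriction of an element of $\mathcal M_d$. $\mathfrak v_\kappa(\Lambda)$: the $\psi\in\mathcal M_d$ whose partial derivatives $\partial^\alpha\psi/\partial x^\alpha$, $|\alpha|\le\kappa$, all vanish on $\Lambda$. $\mathcal Z_{\mathbb B_d}(F)$ is the common zero set in $\mathbb B_d$ of a set of functions $F$. For $z\in\mathbb C^d$, $[f]_z$ denotes the germ at $z$ of a function holomorphic near $z$, in the ring $\mathcal O(z)$ of such germs; for a set $F$ of such functions, $\mathfrak p(F,z)=\{p\in\mathbb C[x_1,\dots,x_d]:[p]_z\in\langle[f]_z:f\in F\rangle\}$ (ideal generated in $\mathcal O(z)$). $\mathfrak m_z=\langle x_1-z_1,\dots,x_d-z_d\rangle\subset\mathbb C[x_1,\dots,x_d]$. When $z$ is an isolated point of the common zero set of $F$, some power of $\mathfrak m_z$ lies in $\mathfrak p(F,z)$, and the polynomial order of $F$ at $z$ is the smallest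 positive integer $\kappa'$ with $\mathfrak m_z^{\kappa'+1}\subset\mathfrak p(F,z)$. (Here $\mathcal Z_{\mathbb B_d}(\mathfrak a)\subset\Lambda$ is discrete, so the polynomial order is defined.) *)

theory Defs
  imports "HOL-Analysis.Analysis"
begin

text \<open>Points of \<open>\<complex>^d\<close> are vectors \<open>complex ^ 'n\<close> (d = CARD('n)).
  Functions on the ball are total functions \<open>complex ^ 'n \<Rightarrow> complex\<close>;
  only their values on the ball matter.\<close>

definition cinner :: "complex ^ 'n \<Rightarrow> complex ^ 'n \<Rightarrow> complex" where
  "cinner z w = (\<Sum>i\<in>UNIV. z $ i * cnj (w $ i))"

abbreviation unit_ball :: "(complex ^ 'n) set" where
  "unit_ball \<equiv> ball 0 1"

definition DA_kernel :: "complex ^ 'n \<Rightarrow> complex ^ 'n \<Rightarrow> complex" where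
  "DA_kernel z w = 1 / (1 - cinner z w)"

text \<open>Membership in the reproducing kernel Hilbert space \<open>H^2_d\<close> with kernel
  \<open>DA_kernel\<close>: the functional \<open>\<Sum> a_i k_{w_i} \<mapsto> \<Sum> conj(a_i) f(w_i)\<close> is bounded
  on the span of the kernel functions (Aronszajn/Moore).\<close>
definition DA_space :: "(complex ^ 'n \<Rightarrow> complex) set" where
  "DA_space = {f. \<exists>C. \<forall>(m::nat) (w::nat \<Rightarrow> complex ^ 'n) (a::nat \<Rightarrow> complex).
       (\<forall>i<m. w i \<in> unit_ball) \<longrightarrow>
       (cmod (\<Sum>i<m. cnj (a i) * f (w i)))\<^sup>2
         \<le> C * Re (\<Sum>i<m. \<Sum>j<m. a i * cnj (a j) * DA_kernel (w j) (w i))}"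

definition mult_DA :: "(complex ^ 'n \<Rightarrow> complex) set" where
  "mult_DA = {\<phi>. \<forall>f\<in>DA_space. (\<lambda>z. \<phi> z * f z) \<in> DA_space}"

definition interpolating :: "(complex ^ 'n) set \<Rightarrow> bool" where
  "interpolating \<Lambda> \<longleftrightarrow> \<Lambda> \<subseteq> unit_ball \<and>
     (\<forall>g :: complex ^ 'n \<Rightarrow> complex. bounded (g ` \<Lambda>) \<longrightarrow>
        (\<exists>\<phi>\<in>mult_DA. \<forall>y\<in>\<Lambda>. \<phi> y = g y))"

definition ideal_Md :: "(complex ^ 'n \<Rightarrow> complex) set \<Rightarrow> bool" where
  "ideal_Md I \<longleftrightarrow> I \<subseteq> mult_DA \<and> (\<lambda>_. 0) \<in> I \<and>
     (\<forall>f\<in>I. \<forall>g\<in>I. (\<lambda>z. f z + g z) \<in> I) \<and>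
     (\<forall>\<phi>\<in>mult_DA. \<forall>f\<in>I. (\<lambda>z. \<phi> z * f z) \<in> I)"

definition cpartial :: "'n \<Rightarrow> (complex ^ 'n \<Rightarrow> complex) \<Rightarrow> (complex ^ 'n \<Rightarrow> complex)" where
  "cpartial i f = (\<lambda>z. deriv (\<lambda>t. f (z + (\<chi> j. if j = i then t else 0))) 0)"

text \<open>Iterated partial derivative along a list of coordinate indices; a
  multi-index \<open>\<alpha>\<close> with \<open>|\<alpha>| = length is\<close> corresponds to such a list
  (for holomorphic functions the order is irrelevant).\<close>
definition cpartials :: "'n list \<Rightarrow> (complex ^ 'n \<Rightarrow> complex) \<Rightarrow> (complex ^ 'n \<Rightarrow> complex)" where
  "cpartials is f = foldr cpartial is f"

definition vanish_ideal :: "nat \<Rightarrow> (complex ^ 'n) set \<Rightarrow> (complex ^ 'n \<Rightarrow> complex) set" where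
  "vanish_ideal \<kappa> \<Lambda> = {\<psi>\<in>mult_DA. \<forall>is. length is \<le> \<kappa> \<longrightarrow> (\<forall>y\<in>\<Lambda>. cpartials is \<psi> y = 0)}"

definition zero_set_ball :: "(complex ^ 'n \<Rightarrow> complex) set \<Rightarrow> (complex ^ 'n) set" where
  "zero_set_ball F = {z\<in>unit_ball. \<forall>f\<in>F. f z = 0}"

definition holo_on :: "(complex ^ 'n \<Rightarrow> complex) \<Rightarrow> (complex ^ 'n) set \<Rightarrow> bool" where
  "holo_on f U \<longleftrightarrow> (\<forall>x\<in>U. \<exists>L. (f has_derivative L) (at x) \<and>
                        (\<forall>(c::complex) v. L (c *s v) = c * L v))"

definition monom_at :: "complex ^ 'n \<Rightarrow> ('n \<Rightarrow> nat) \<Rightarrow> complex ^ 'n \<Rightarrow> complex" where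
  "monom_at c \<beta> x = (\<Prod>i\<in>UNIV. (x $ i - c $ i) ^ \<beta> i)"

definition is_poly :: "(complex ^ 'n \<Rightarrow> complex) \<Rightarrow> bool" where
  "is_poly p \<longleftrightarrow> (\<exists>A coef. finite A \<and>
      (\<forall>x. p x = (\<Sum>\<alpha>\<in>A. coef \<alpha> * monom_at 0 \<alpha> x)))"

definition mdeg :: "('n::finite \<Rightarrow> nat) \<Rightarrow> nat" where
  "mdeg \<beta> = (\<Sum>i\<in>UNIV. \<beta> i)"

text \<open>\<open>\<m>_z^k\<close>: the ideal of \<open>\<complex>[x_1,\<dots>,x_d]\<close> generated by all products of
  \<open>k\<close> of the generators \<open>x_i - z_i\<close>.\<close>
definition maxideal_pow :: "complex ^ 'n \<Rightarrow> nat \<Rightarrow> (complex ^ 'n \<Rightarrow> complex) set" where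
  "maxideal_pow z k = {p. \<exists>B q. finite B \<and> (\<forall>\<beta>\<in>B. mdeg \<beta> = k \<and> is_poly (q \<beta>)) \<and>
      (\<forall>x. p x = (\<Sum>\<beta>\<in>B. q \<beta> x * monom_at z \<beta> x))}"

text \<open>\<open>\<p>(F,z)\<close>: polynomials whose germ at \<open>z\<close> lies in the ideal of \<open>\<O>(z)\<close>
  generated by the germs of elements of \<open>F\<close>.\<close>
definition poly_germ_ideal :: "(complex ^ 'n \<Rightarrow> complex) set \<Rightarrow> complex ^ 'n \<Rightarrow> (complex ^ 'n \<Rightarrow> complex) set" where
  "poly_germ_ideal F z = {p. is_poly p \<and>
     (\<exists>U (m::nat) f g. open U \<and> z \<in> U \<and> (\<forall>i<m. f i \<in> F \<and> holo_on (g i) U) \<and>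
        (\<forall>x\<in>U. p x = (\<Sum>i<m. g i x * f i x)))}"

definition poly_order :: "(complex ^ 'n \<Rightarrow> complex) set \<Rightarrow> complex ^ 'n \<Rightarrow> nat" where
  "poly_order F z = (LEAST k. maxideal_pow z (k + 1) \<subseteq> poly_germ_ideal F z)"

end

theory Submission
  imports Defs "HOL-Complex_Analysis.Complex_Analysis"
begin

text \<open>Multipliers of \<open>H\<^sup>2\<^sub>d\<close> are continuous and holomorphic in each variable on the ball:
  testing the defining inequality of \<open>DA_space\<close> against two or four kernel functions bounds
  \<open>\<bar>f x - f y\<bar>\<close> and the Cauchy defect of the difference quotients along coordinate lines by
  expressions in the kernel that tend to \<open>0\<close>. By Cauchy's formula, Morera's theorem and Osgood's
  lemma such functions are holomorphic and their partial derivatives are again of the same kind,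
  so a sum of products of \<open>\<kappa> + 1\<close> of them, each vanishing at \<open>y\<close>, has vanishing partial
  derivatives of order \<open>\<le> \<kappa>\<close> at \<open>y\<close>.

  Since multipliers are continuous, an interpolating set has no accumulation point in the ball.
  If \<open>z \<notin> \<Lambda>\<close>, then \<open>\<Lambda>\<close> therefore stays away from \<open>z\<close>, and interpolating
  \<open>cnj (y\<^sub>k - z\<^sub>k) / \<parallel>y - z\<parallel>\<^sup>2\<close> gives a multiplier \<open>\<psi>\<close> with \<open>\<psi> = 0\<close> on \<open>\<Lambda>\<close> and \<open>\<psi> z = 1\<close>;
  then \<open>\<psi>\<^bsup>\<kappa>+1\<^esup> \<in> \<v>\<^sub>\<kappa>(\<Lambda>) \<subseteq> \<aa>\<close> does not vanish at \<open>z\<close>. So the zero set of \<open>\<aa>\<close> lies in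
  \<open>\<Lambda>\<close>. For \<open>z \<in> \<Lambda>\<close> let \<open>\<phi>\<close> interpolate the indicator of \<open>z\<close> and \<open>h = \<phi>\<^bsup>\<kappa>+1\<^esup>\<close>. For
  \<open>|\<beta>| = \<kappa> + 1\<close> the multiplier \<open>(x - z)\<^sup>\<beta> h\<close> vanishes to order \<open>\<kappa> + 1\<close> at every point of
  \<open>\<Lambda>\<close>, hence lies in \<open>\<aa>\<close>; as \<open>h z = 1\<close>, an element \<open>\<Sum> q\<^sub>\<beta> (x - z)\<^sup>\<beta>\<close> of
  \<open>\<m>\<^sub>z\<^bsup>\<kappa>+1\<^esup>\<close> equals \<open>\<Sum> (q\<^sub>\<beta> / h) \<cdot> (x - z)\<^sup>\<beta> h\<close> near \<open>z\<close>.\<close>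

section \<open>Coordinate lines\<close>

lemma cpartial_axis: "cpartial i f z = deriv (\<lambda>t. f (z + axis i t)) 0"
  by (simp add: cpartial_def axis_def)

lemma axis_add: "axis i a + axis i b = axis i (a + b :: 'a::monoid_add)"
  by (simp add: axis_def vec_eq_iff)

lemma axis_zero [simp]: "axis i (0 :: 'a::zero) = 0"
  by (simp add: axis_def vec_eq_iff)

lemma norm_axis: "norm (axis i (t :: 'a::real_normed_vector)) = norm t"
proof -
  have "norm (axis i t) = sqrt (\<Sum>j\<in>UNIV. (norm (axis i t $ j))\<^sup>2)"
    by (simp add: norm_vec_def L2_set_def)
  also have "(\<lambda>j. (norm (axis i t $ j))\<^sup>2) = (\<lambda>j. if j = i then (norm t)\<^sup>2 else 0)"
    by (auto simp: axis_def)
  finally show ?thesis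
    by simp
qed

lemma bounded_linear_axis: "bounded_linear (axis i :: 'a::real_normed_vector \<Rightarrow> 'a ^ 'n)"
proof -
  have "axis i (r *\<^sub>R x) = r *\<^sub>R axis i x" for r and x :: 'a
    by (simp add: axis_def vec_eq_iff)
  then show ?thesis
    by (intro bounded_linear_intro[where K=1]) (auto simp: axis_add norm_axis)
qed

lemma continuous_on_axis [continuous_intros]:
  "continuous_on A g \<Longrightarrow> continuous_on A (\<lambda>x. axis j (g x :: 'a::real_normed_vector))"
  using bounded_linear.continuous_on[OF bounded_linear_axis] by blast

lemma add_axis_in_cball:
  fixes x :: "'a::real_normed_vector ^ 'n"
  shows "norm t \<le> r \<Longrightarrow> x + axis i t \<in> cball x r"
  by (simp add: dist_norm norm_axis)

lemma eventually_nhds_add_axis_in: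
  fixes y :: "'a::real_normed_vector ^ 'n"
  assumes "open U" "y \<in> U"
  shows "eventually (\<lambda>t. y + axis i t \<in> U) (nhds 0)"
proof -
  obtain e where e: "e > 0" "ball y e \<subseteq> U"
    using assms openE by blast
  have "eventually (\<lambda>t. t \<in> ball 0 e) (nhds 0)"
    using e by (intro eventually_nhds_in_open) auto
  then show ?thesis
    by eventually_elim (use e in \<open>auto simp: dist_norm norm_axis\<close>)
qed

section \<open>Separately holomorphic functions\<close>

definition sep_holomorphic_on :: "(complex ^ 'n \<Rightarrow> complex) \<Rightarrow> (complex ^ 'n) set \<Rightarrow> bool" where
  "sep_holomorphic_on f U \<longleftrightarrow> continuous_on U f \<and>
     (\<forall>y\<in>U. \<forall>i. (\<lambda>t. f (y + axis i t)) field_differentiable (at 0))"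

lemma sep_holomorphic_on_imp_continuous_on: "sep_holomorphic_on f U \<Longrightarrow> continuous_on U f"
  by (simp add: sep_holomorphic_on_def)

lemma sep_holomorphic_on_line_derivative:
  assumes "sep_holomorphic_on f U" "y + axis i t0 \<in> U"
  shows "((\<lambda>t. f (y + axis i t)) has_field_derivative cpartial i f (y + axis i t0)) (at t0)"
proof -
  let ?w = "y + axis i t0"
  have "(\<lambda>s. f (?w + axis i s)) field_differentiable (at 0)"
    using assms unfolding sep_holomorphic_on_def by blast
  then have "((\<lambda>s. f (?w + axis i s)) has_field_derivative cpartial i f ?w) (at (t0 + (-t0)))"
    by (simp add: cpartial_axis DERIV_deriv_iff_field_differentiable)
  from DERIV_shift[THEN iffD1, OF this]
  show ?thesis
    by (simp add: add.assoc axis_add)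
qed

lemma sep_holomorphic_on_line_holomorphic:
  assumes "sep_holomorphic_on f U" "\<And>t. t \<in> S \<Longrightarrow> x + axis i t \<in> U" "open S"
  shows "(\<lambda>t. f (x + axis i t)) holomorphic_on S"
  unfolding holomorphic_on_open[OF assms(3)]
  using sep_holomorphic_on_line_derivative[OF assms(1)] assms(2) by blast

lemma sep_holomorphic_on_cong:
  assumes "sep_holomorphic_on g U" "open U" "\<And>x. x \<in> U \<Longrightarrow> f x = g x"
  shows "sep_holomorphic_on f U"
  unfolding sep_holomorphic_on_def
proof safe
  show "continuous_on U f"
    using assms continuous_on_cong unfolding sep_holomorphic_on_def by metis
next
  fix y i assume y: "y \<in> U"
  have "((\<lambda>t. g (y + axis i t)) has_field_derivative cpartial i g y) (at 0)"
    using sep_holomorphic_on_line_derivative[OF assms(1), of y i 0] y by simp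
  moreover have "eventually (\<lambda>t. f (y + axis i t) = g (y + axis i t)) (nhds 0)"
    using eventually_nhds_add_axis_in[OF assms(2) y] by eventually_elim (use assms in auto)
  ultimately show "(\<lambda>t. f (y + axis i t)) field_differentiable (at 0)"
    unfolding field_differentiable_def by (metis DERIV_cong_ev)
qed

lemma sep_holomorphic_on_subset: "sep_holomorphic_on f U \<Longrightarrow> V \<subseteq> U \<Longrightarrow> sep_holomorphic_on f V"
  unfolding sep_holomorphic_on_def by (auto intro: continuous_on_subset)

lemma sep_holomorphic_on_const: "sep_holomorphic_on (\<lambda>x. c) U"
  unfolding sep_holomorphic_on_def by auto

lemma sep_holomorphic_on_coordinate: "sep_holomorphic_on (\<lambda>x::complex ^ 'n. x $ k) U"
  unfolding sep_holomorphic_on_def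
proof (intro conjI ballI allI)
  fix y :: "complex ^ 'n" and i
  have "(\<lambda>t::complex. y $ k + (if k = i then t else 0)) field_differentiable at 0"
    by (cases "k = i") (simp_all add: field_differentiable_add field_differentiable_ident)
  moreover have "(\<lambda>t. ((y + axis i t) $ k)) = (\<lambda>t. y $ k + (if k = i then t else 0))"
    by (auto simp: axis_def)
  ultimately show "(\<lambda>t. ((y + axis i t) $ k)) field_differentiable at 0"
    by simp
qed (intro continuous_intros)

lemma sep_holomorphic_on_add:
  "sep_holomorphic_on f U \<Longrightarrow> sep_holomorphic_on g U \<Longrightarrow> sep_holomorphic_on (\<lambda>x. f x + g x) U"
  unfolding sep_holomorphic_on_def by (auto intro!: continuous_intros field_differentiable_add)

lemma sep_holomorphic_on_mult:
  "sep_holomorphic_on f U \<Longrightarrow> sep_holomorphic_on g U \<Longrightarrow> sep_holomorphic_on (\<lambda>x. f x * g x) U"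
  unfolding sep_holomorphic_on_def by (auto intro!: continuous_intros field_differentiable_mult)

lemma sep_holomorphic_on_diff:
  "sep_holomorphic_on f U \<Longrightarrow> sep_holomorphic_on g U \<Longrightarrow> sep_holomorphic_on (\<lambda>x. f x - g x) U"
  unfolding sep_holomorphic_on_def by (auto intro!: continuous_intros field_differentiable_diff)

lemma sep_holomorphic_on_sum:
  "finite A \<Longrightarrow> (\<And>a. a \<in> A \<Longrightarrow> sep_holomorphic_on (f a) U) \<Longrightarrow>
    sep_holomorphic_on (\<lambda>x. \<Sum>a\<in>A. f a x) U"
  by (induction A rule: finite_induct) (auto intro: sep_holomorphic_on_const sep_holomorphic_on_add)

lemma sep_holomorphic_on_prod:
  "finite A \<Longrightarrow> (\<And>a. a \<in> A \<Longrightarrow> sep_holomorphic_on (f a) U) \<Longrightarrow>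
    sep_holomorphic_on (\<lambda>x. \<Prod>a\<in>A. f a x) U"
  by (induction A rule: finite_induct) (auto intro: sep_holomorphic_on_const sep_holomorphic_on_mult)

lemma sep_holomorphic_on_power: "sep_holomorphic_on f U \<Longrightarrow> sep_holomorphic_on (\<lambda>x. f x ^ n) U"
  by (induction n) (auto intro: sep_holomorphic_on_const sep_holomorphic_on_mult)

lemma sep_holomorphic_on_inverse:
  "sep_holomorphic_on f U \<Longrightarrow> (\<And>x. x \<in> U \<Longrightarrow> f x \<noteq> 0) \<Longrightarrow>
    sep_holomorphic_on (\<lambda>x. inverse (f x)) U"
  unfolding sep_holomorphic_on_def by (auto intro!: continuous_intros field_differentiable_inverse)

section \<open>Contour integrals depending on a parameter\<close>

lemma continuous_on_contour_integral_param:
  assumes H: "continuous_on (U \<times> path_image g) (\<lambda>(x, u). H x u)"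
    and g: "valid_path g" "continuous_on {0..1} (\<lambda>t. vector_derivative g (at t))"
  shows "continuous_on U (\<lambda>x. contour_integral g (H x))"
proof -
  have "continuous_on {0..1} g"
    using g(1) valid_path_imp_path path_def by blast
  then have "continuous_on (U \<times> {0..1}) (\<lambda>p. g (snd p))"
    by (rule continuous_on_compose2[OF _ continuous_on_snd]) auto
  then have "continuous_on (U \<times> {0..1}) (\<lambda>p. (fst p, g (snd p)))"
    by (intro continuous_on_Pair continuous_on_fst continuous_on_id)
  then have "continuous_on (U \<times> {0..1}) (\<lambda>p. (\<lambda>(x, u). H x u) (fst p, g (snd p)))"
    by (rule continuous_on_compose2[OF H]) (auto simp: path_image_def)
  then have "continuous_on (U \<times> {0..1}) (\<lambda>(x, t). H x (g t))"
    by (simp add: split_beta)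
  then have "continuous_on (U \<times> cbox 0 1) (\<lambda>(x, t). H x (g t) * vector_derivative g (at t))"
    by (auto simp: split_beta intro!: continuous_intros continuous_on_compose2[OF g(2)])
  from integral_continuous_on_param[OF this] show ?thesis
    by (simp add: contour_integral_integral)
qed

lemma continuous_on_vector_derivative_circlepath:
  "continuous_on {0..1} (\<lambda>t. vector_derivative (circlepath z r) (at t))"
  by (simp add: vector_derivative_circlepath) (intro continuous_intros)

lemma continuous_on_contour_integral_circlepath_param:
  assumes "continuous_on (U \<times> sphere 0 r) (\<lambda>(x, u). H x u)" "0 \<le> r"
  shows "continuous_on U (\<lambda>x. contour_integral (circlepath 0 r) (H x))"
  using assms by (intro continuous_on_contour_integral_param continuous_on_vector_derivative_circlepath)
    auto

lemma analytic_on_contour_integral_circlepath_param: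
  fixes H :: "complex \<Rightarrow> complex \<Rightarrow> complex"
  assumes "open S" "0 \<le> r"
    and H: "continuous_on (S \<times> sphere 0 r) (\<lambda>(s, u). H s u)"
    and hol: "\<And>u. u \<in> sphere 0 r \<Longrightarrow> (\<lambda>s. H s u) holomorphic_on S"
  shows "(\<lambda>s. contour_integral (circlepath 0 r) (H s)) analytic_on S"
proof (rule Morera_triangle)
  \<comment> \<open>The triangle integrals are exchanged with the circle integral.\<close>
  show "continuous_on S (\<lambda>s. contour_integral (circlepath 0 r) (H s))"
    by (rule continuous_on_contour_integral_circlepath_param[OF H \<open>0 \<le> r\<close>])
  let ?I = "\<lambda>p q u. contour_integral (linepath p q) (\<lambda>s. H s u)"
  have swap: "contour_integral (linepath p q) (\<lambda>s. contour_integral (circlepath 0 r) (H s)) =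
      contour_integral (circlepath 0 r) (?I p q)"
    and int: "?I p q contour_integrable_on circlepath 0 r"
    if pq: "closed_segment p q \<subseteq> S" for p q
  proof -
    have "continuous_on (closed_segment p q \<times> sphere 0 r) (\<lambda>(s, u). H s u)"
      by (rule continuous_on_subset[OF H]) (use pq in auto)
    then show "contour_integral (linepath p q) (\<lambda>s. contour_integral (circlepath 0 r) (H s)) =
        contour_integral (circlepath 0 r) (?I p q)"
      using \<open>0 \<le> r\<close>
      by (intro contour_integral_swap continuous_on_vector_derivative_circlepath) auto
    have "continuous_on (sphere 0 r \<times> closed_segment p q) (\<lambda>(u, s). H s u)"
      by (rule continuous_on_swap_args, rule continuous_on_subset[OF H]) (use pq in auto)
    then have "continuous_on (sphere 0 r) (?I p q)"
      by (intro continuous_on_contour_integral_param) auto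
    then show "?I p q contour_integrable_on circlepath 0 r"
      using \<open>0 \<le> r\<close> by (intro contour_integrable_continuous_circlepath) auto
  qed
  fix a b c
  show "convex hull {a, b, c} \<subseteq> S \<longrightarrow>
      contour_integral (linepath a b) (\<lambda>s. contour_integral (circlepath 0 r) (H s)) +
      contour_integral (linepath b c) (\<lambda>s. contour_integral (circlepath 0 r) (H s)) +
      contour_integral (linepath c a) (\<lambda>s. contour_integral (circlepath 0 r) (H s)) = 0"
  proof
    assume abc: "convex hull {a, b, c} \<subseteq> S"
    then have seg: "closed_segment a b \<subseteq> S" "closed_segment b c \<subseteq> S" "closed_segment c a \<subseteq> S"
      using segments_subset_convex_hull by (meson subset_trans)+
    have "?I a b u + ?I b c u + ?I c a u = 0" if u: "u \<in> sphere 0 r" for u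
    proof -
      have holT: "(\<lambda>s. H s u) holomorphic_on convex hull {a, b, c}"
        using holomorphic_on_subset[OF hol[OF u] abc] .
      have ci: "(\<lambda>s. H s u) contour_integrable_on linepath p q" if "closed_segment p q \<subseteq> S" for p q
        using holomorphic_on_imp_continuous_on[OF hol[OF u]] that
        by (intro contour_integrable_continuous_linepath) (auto intro: continuous_on_subset)
      have "contour_integral (linepath a b +++ linepath b c +++ linepath c a) (\<lambda>s. H s u) = 0"
        by (rule contour_integral_unique[OF Cauchy_theorem_triangle[OF holT]])
      then show ?thesis
        using ci[OF seg(1)] ci[OF seg(2)] ci[OF seg(3)] by (simp add: add.assoc)
    qed
    then have "contour_integral (circlepath 0 r) (\<lambda>u. ?I a b u + ?I b c u + ?I c a u) =
        contour_integral (circlepath 0 r) (\<lambda>u. 0)"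
      using \<open>0 \<le> r\<close> by (intro contour_integral_eq) simp
    then show "contour_integral (linepath a b) (\<lambda>s. contour_integral (circlepath 0 r) (H s)) +
      contour_integral (linepath b c) (\<lambda>s. contour_integral (circlepath 0 r) (H s)) +
      contour_integral (linepath c a) (\<lambda>s. contour_integral (circlepath 0 r) (H s)) = 0"
      using int[OF seg(1)] int[OF seg(2)] int[OF seg(3)]
      by (simp add: swap[OF seg(1)] swap[OF seg(2)] swap[OF seg(3)] contour_integral_add
          contour_integrable_add)
  qed
qed (fact \<open>open S\<close>)

section \<open>Partial derivatives\<close>

lemma cpartial_eq_circlepath_integral:
  fixes x :: "complex ^ 'n"
  assumes f: "sep_holomorphic_on f U" and r: "r > 0" "cball x r \<subseteq> U"
  shows "cpartial i f x =
    contour_integral (circlepath 0 r) (\<lambda>u. f (x + axis i u) / u\<^sup>2) / (2 * of_real pi * \<i>)"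
proof -
  let ?g = "\<lambda>t. f (x + axis i t)"
  have in_U: "x + axis i t \<in> U" if "t \<in> cball 0 r" for t
    using add_axis_in_cball[of t r x i] that r by auto
  have "continuous_on (cball 0 r) ?g"
    using in_U by (intro continuous_on_compose2[OF sep_holomorphic_on_imp_continuous_on[OF f]]
        continuous_intros) auto
  moreover have "?g holomorphic_on ball 0 r"
    using in_U by (intro sep_holomorphic_on_line_holomorphic[OF f]) auto
  ultimately have "(?g has_field_derivative
      (1 / (2 * of_real pi * \<i>) * contour_integral (circlepath 0 r) (\<lambda>u. ?g u / (u - 0)\<^sup>2))) (at 0)"
    using r by (intro Cauchy_derivative_integral_circlepath(2)) auto
  moreover have "(?g has_field_derivative cpartial i f x) (at 0)"
    using sep_holomorphic_on_line_derivative[OF f, of x i 0] in_U[of 0] r by simp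
  ultimately show ?thesis
    using DERIV_unique by fastforce
qed

lemma cball_subset_cball_double:
  fixes x y :: "'a::metric_space"
  assumes "dist y x < r"
  shows "cball x r \<subseteq> cball y (2 * r)"
proof
  fix z assume "z \<in> cball x r"
  then show "z \<in> cball y (2 * r)"
    using dist_triangle[of y z x] assms by simp
qed

lemma continuous_on_cpartial:
  fixes U :: "(complex ^ 'n) set"
  assumes U: "open U" and f: "sep_holomorphic_on f U"
  shows "continuous_on U (cpartial i f)"
proof (intro continuous_at_imp_continuous_on ballI)
  fix y assume "y \<in> U"
  then obtain r where r: "r > 0" "cball y (2 * r) \<subseteq> U"
    using U open_contains_cball by (metis field_sum_of_halves half_gt_zero mult_2)
  have sub: "cball x r \<subseteq> U" if "x \<in> ball y r" for x
    using cball_subset_cball_double[of y x r] that r(2) by auto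
  have "x + axis i u \<in> U" if "x \<in> ball y r" "u \<in> sphere 0 r" for x u
    using sub[OF that(1)] add_axis_in_cball[of u r x i] that(2) by auto
  then have "continuous_on (ball y r \<times> sphere 0 r) (\<lambda>(x, u). f (x + axis i u) / u\<^sup>2)"
    using r(1)
    by (auto simp: split_beta intro!: continuous_intros
        continuous_on_compose2[OF sep_holomorphic_on_imp_continuous_on[OF f]])
  then have "continuous_on (ball y r)
      (\<lambda>x. contour_integral (circlepath 0 r) (\<lambda>u. f (x + axis i u) / u\<^sup>2) / (2 * of_real pi * \<i>))"
    using r by (intro continuous_intros continuous_on_contour_integral_circlepath_param) auto
  then have "continuous_on (ball y r) (cpartial i f)"
    by (rule continuous_on_cong[THEN iffD1, OF refl, rotated])
      (use sub r in \<open>simp add: cpartial_eq_circlepath_integral[OF f]\<close>)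
  then show "isCont (cpartial i f) y"
    using r by (simp add: continuous_on_eq_continuous_at)
qed

lemma sep_holomorphic_on_cpartial:
  fixes U :: "(complex ^ 'n) set"
  assumes U: "open U" and f: "sep_holomorphic_on f U"
  shows "sep_holomorphic_on (cpartial i f) U"
  unfolding sep_holomorphic_on_def
proof (intro conjI ballI allI continuous_on_cpartial[OF U f])
  fix y j assume "y \<in> U"
  then obtain r where r: "r > 0" "cball y (2 * r) \<subseteq> U"
    using U open_contains_cball by (metis field_sum_of_halves half_gt_zero mult_2)
  define H where "H = (\<lambda>s u. f (y + axis j s + axis i u) / u\<^sup>2)"
  have sub: "cball (y + axis j s) r \<subseteq> U" if "s \<in> ball 0 r" for s
    using cball_subset_cball_double[of y "y + axis j s" r] that r(2) by (auto simp: dist_norm norm_axis)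
  have inU: "y + axis j s + axis i u \<in> U" if "s \<in> ball 0 r" "u \<in> sphere 0 r" for s u
    using sub[OF that(1)] add_axis_in_cball[of u r "y + axis j s" i] that(2) by auto
  have "continuous_on (ball 0 r \<times> sphere 0 r) (\<lambda>(s, u). H s u)"
    unfolding H_def using inU r(1)
    by (auto simp: split_beta intro!: continuous_intros
        continuous_on_compose2[OF sep_holomorphic_on_imp_continuous_on[OF f]])
  moreover have "(\<lambda>s. H s u) holomorphic_on ball 0 r" if "u \<in> sphere 0 r" for u
  proof -
    have "(\<lambda>s. f ((y + axis i u) + axis j s)) holomorphic_on ball 0 r"
      using inU that by (intro sep_holomorphic_on_line_holomorphic[OF f]) (auto simp: add_ac)
    then show ?thesis
      unfolding H_def by (intro holomorphic_intros) (auto simp: add_ac)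
  qed
  ultimately have "(\<lambda>s. contour_integral (circlepath 0 r) (H s) / (2 * of_real pi * \<i>))
      analytic_on ball 0 r"
    using r(1) by (intro analytic_intros analytic_on_contour_integral_circlepath_param) auto
  then have "(\<lambda>s. contour_integral (circlepath 0 r) (H s) / (2 * of_real pi * \<i>))
      field_differentiable at 0"
    using r(1) by (intro analytic_on_imp_differentiable_at) auto
  moreover have "eventually (\<lambda>s. s \<in> ball 0 r) (nhds (0::complex))"
    using r(1) by (intro eventually_nhds_in_open) auto
  then have "eventually (\<lambda>s. cpartial i f (y + axis j s) =
      contour_integral (circlepath 0 r) (H s) / (2 * of_real pi * \<i>)) (nhds 0)"
    by eventually_elim (simp add: H_def cpartial_eq_circlepath_integral[OF f r(1) sub])
  ultimately show "(\<lambda>t. cpartial i f (y + axis j t)) field_differentiable at 0"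
    unfolding field_differentiable_def by (metis DERIV_cong_ev)
qed

lemma norm_increment_minus_partials_le:
  fixes f :: "complex ^ 'n \<Rightarrow> complex"
  assumes f: "sep_holomorphic_on f U" and "ball x d \<subseteq> U"
    and P: "\<And>i w. dist w x < d \<Longrightarrow> norm (cpartial i f w - cpartial i f x) \<le> e"
    and h: "norm h < d"
  shows "norm (f (x + h) - f x - (\<Sum>i\<in>UNIV. h $ i * cpartial i f x)) \<le> e * (\<Sum>i\<in>UNIV. cmod (h $ i))"
proof -
  define restr where "restr S = (\<chi> j. if j \<in> S then h $ j else 0)" for S
  have restr_le: "norm (restr S + axis i t) \<le> norm h" if "i \<notin> S" "cmod t \<le> cmod (h $ i)" for S i t
  proof (rule norm_le_componentwise_cart)
    show "norm ((restr S + axis i t) $ j) \<le> norm (h $ j)" for j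
      using that by (cases "j = i") (simp_all add: restr_def axis_def)
  qed
  \<comment> \<open>Change one coordinate at a time and apply the mean value bound on each segment.\<close>
  have partial: "norm (f (x + restr S) - f x - (\<Sum>i\<in>S. h $ i * cpartial i f x))
      \<le> e * (\<Sum>i\<in>S. cmod (h $ i))" for S
  proof (induction S rule: finite_induct[OF finite])
    case 1
    have "restr {} = 0"
      by (simp add: restr_def vec_eq_iff)
    then show ?case
      by simp
  next
    case (2 i S)
    let ?w = "x + restr S"
    define g where "g = (\<lambda>t. f (?w + axis i t) - t * cpartial i f x)"
    have near: "dist (?w + axis i t) x < d" if "t \<in> closed_segment 0 (h $ i)" for t
      using restr_le[of i S t] segment_bound1[OF that] 2 h by (simp add: dist_norm add.assoc)
    have "(g has_field_derivative (cpartial i f (?w + axis i t) - cpartial i f x))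
        (at t within closed_segment 0 (h $ i))" if "t \<in> closed_segment 0 (h $ i)" for t
    proof -
      have "?w + axis i t \<in> U"
        using near[OF that] assms(2) by (auto simp: dist_commute)
      from sep_holomorphic_on_line_derivative[OF f this]
      have "((\<lambda>t. f (?w + axis i t)) has_field_derivative cpartial i f (?w + axis i t)) (at t)" .
      from DERIV_diff[OF this DERIV_cmult_Id[of "cpartial i f x" t]] show ?thesis
        unfolding g_def by (simp add: mult.commute has_field_derivative_at_within)
    qed
    moreover have "norm (cpartial i f (?w + axis i t) - cpartial i f x) \<le> e"
      if "t \<in> closed_segment 0 (h $ i)" for t
      using P[OF near[OF that]] .
    ultimately have "norm (g (h $ i) - g 0) \<le> e * norm (h $ i - 0)"
      by (intro field_differentiable_bound[OF convex_closed_segment]) auto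
    moreover have "x + restr (insert i S) = ?w + axis i (h $ i)"
      using 2 by (simp add: restr_def axis_def vec_eq_iff)
    ultimately have A: "norm (f (x + restr (insert i S)) - f ?w - h $ i * cpartial i f x) \<le> e * cmod (h $ i)"
      by (simp add: g_def algebra_simps)
    have "f (x + restr (insert i S)) - f x - (\<Sum>j\<in>insert i S. h $ j * cpartial j f x)
        = (f (x + restr (insert i S)) - f ?w - h $ i * cpartial i f x)
          + (f ?w - f x - (\<Sum>j\<in>S. h $ j * cpartial j f x))"
      using 2 by simp
    also have "norm \<dots> \<le> e * cmod (h $ i) + e * (\<Sum>j\<in>S. cmod (h $ j))"
      by (rule order_trans[OF norm_triangle_ineq add_mono[OF A "2.IH"]])
    also have "\<dots> = e * (\<Sum>j\<in>insert i S. cmod (h $ j))"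
      using 2 by (simp add: distrib_left)
    finally show ?case .
  qed
  have "restr UNIV = h"
    by (simp add: restr_def vec_eq_iff)
  with partial[of UNIV] show ?thesis
    by simp
qed

lemma sep_holomorphic_on_imp_holo_on:
  fixes U :: "(complex ^ 'n) set"
  assumes U: "open U" and f: "sep_holomorphic_on f U"
  shows "holo_on f U"
  unfolding holo_on_def
proof
  fix x assume x: "x \<in> U"
  define L where "L = (\<lambda>v::complex ^ 'n. \<Sum>i\<in>UNIV. v $ i * cpartial i f x)"
  have "bounded_linear L"
    unfolding L_def
    by (intro bounded_linear_sum bounded_linear_compose[OF bounded_linear_mult_left bounded_linear_vec_nth])
  moreover have "\<exists>d>0. \<forall>y. norm (y - x) < d \<longrightarrow> norm (f y - f x - L (y - x)) \<le> e * norm (y - x)"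
    if e: "e > 0" for e
  proof -
    define N where "N = real CARD('n)"
    have N: "N > 0"
      by (simp add: N_def)
    have "\<forall>i. \<exists>d>0. \<forall>w. dist w x < d \<longrightarrow> dist (cpartial i f w) (cpartial i f x) < e / N"
      using continuous_on_cpartial[OF U f] U x e N
      by (metis continuous_at_eps_delta continuous_on_eq_continuous_at divide_pos_pos)
    then obtain D where D: "\<And>i. D i > 0" "\<And>i w. dist w x < D i \<Longrightarrow> dist (cpartial i f w) (cpartial i f x) < e / N"
      by metis
    obtain d0 where d0: "d0 > 0" "ball x d0 \<subseteq> U"
      using U x openE by blast
    define d where "d = min d0 (Min (range D))"
    have d: "d > 0" "ball x d \<subseteq> U" "\<And>i. d \<le> D i"
      using d0 D by (auto simp: d_def min.coboundedI2)
    show ?thesis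
    proof (intro exI[of _ d] conjI allI impI d)
      fix y assume y: "norm (y - x) < d"
      have "norm (cpartial i f w - cpartial i f x) \<le> e / N" if "dist w x < d" for i w
        using D(2)[of w i] d(3)[of i] that by (simp add: dist_norm)
      from norm_increment_minus_partials_le[OF f d(2) this y]
      have "norm (f y - f x - L (y - x)) \<le> e / N * (\<Sum>i\<in>UNIV. cmod ((y - x) $ i))"
        by (simp add: L_def)
      also have "\<dots> \<le> e / N * (\<Sum>i\<in>(UNIV::'n set). norm (y - x))"
        using e N by (intro mult_left_mono sum_mono Finite_Cartesian_Product.norm_nth_le) auto
      also have "\<dots> = e * norm (y - x)"
        using N by (simp add: N_def)
      finally show "norm (f y - f x - L (y - x)) \<le> e * norm (y - x)" .
    qed
  qed
  ultimately have "(f has_derivative L) (at x)"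
    by (simp add: has_derivative_at_alt)
  moreover have "L (c *s v) = c * L v" for c v
    by (simp add: L_def sum_distrib_left mult.assoc)
  ultimately show "\<exists>L. (f has_derivative L) (at x) \<and> (\<forall>c v. L (c *s v) = c * L v)"
    by blast
qed

section \<open>Vanishing to a given order\<close>

lemma cpartial_cong:
  assumes "open U" "x \<in> U" "\<And>x. x \<in> U \<Longrightarrow> f x = g x"
  shows "cpartial i f x = cpartial i g x"
  unfolding cpartial_axis
proof (rule deriv_cong_ev)
  show "eventually (\<lambda>t. f (x + axis i t) = g (x + axis i t)) (nhds 0)"
    using eventually_nhds_add_axis_in[OF assms(1,2), of i] by eventually_elim (simp add: assms(3))
qed simp

lemma cpartial_add:
  assumes "sep_holomorphic_on f U" "sep_holomorphic_on g U" "x \<in> U"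
  shows "cpartial i (\<lambda>x. f x + g x) x = cpartial i f x + cpartial i g x"
  using DERIV_add[OF sep_holomorphic_on_line_derivative[OF assms(1), of x i 0]
      sep_holomorphic_on_line_derivative[OF assms(2), of x i 0]] assms(3)
  by (simp add: DERIV_imp_deriv cpartial_axis)

lemma cpartial_mult:
  assumes "sep_holomorphic_on f U" "sep_holomorphic_on g U" "x \<in> U"
  shows "cpartial i (\<lambda>x. f x * g x) x = cpartial i f x * g x + f x * cpartial i g x"
  using DERIV_mult[OF sep_holomorphic_on_line_derivative[OF assms(1), of x i 0]
      sep_holomorphic_on_line_derivative[OF assms(2), of x i 0]] assms(3)
  by (simp add: DERIV_imp_deriv cpartial_axis mult.commute)

text \<open>\<open>vanishes_to_order U y k f\<close>: \<open>f\<close> lies in the \<open>k\<close>-th power of the ideal of separately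
  holomorphic functions on \<open>U\<close> vanishing at \<open>y\<close> (identities are only required on \<open>U\<close>).\<close>

inductive vanishes_to_order :: "(complex ^ 'n) set \<Rightarrow> complex ^ 'n \<Rightarrow> nat \<Rightarrow> (complex ^ 'n \<Rightarrow> complex) \<Rightarrow> bool"
  for U y where
  base: "sep_holomorphic_on f U \<Longrightarrow> vanishes_to_order U y 0 f"
| mult: "vanishes_to_order U y k g \<Longrightarrow> sep_holomorphic_on h U \<Longrightarrow> h y = 0 \<Longrightarrow>
    (\<forall>x\<in>U. f x = g x * h x) \<Longrightarrow> vanishes_to_order U y (Suc k) f"
| add: "vanishes_to_order U y (Suc k) f1 \<Longrightarrow> vanishes_to_order U y (Suc k) f2 \<Longrightarrow>
    (\<forall>x\<in>U. f x = f1 x + f2 x) \<Longrightarrow> vanishes_to_order U y (Suc k) f"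

context
  fixes U :: "(complex ^ 'n) set" and y :: "complex ^ 'n"
  assumes U: "open U"
begin

lemma vanishes_to_order_imp_sep_holomorphic_on:
  "vanishes_to_order U y k f \<Longrightarrow> sep_holomorphic_on f U"
proof (induction rule: vanishes_to_order.induct)
  case (mult k g h f)
  then show ?case
    using sep_holomorphic_on_cong[OF sep_holomorphic_on_mult[of g U h] U] by auto
next
  case (add k f1 f2 f)
  then show ?case
    using sep_holomorphic_on_cong[OF sep_holomorphic_on_add[of f1 U f2] U] by auto
qed

lemma vanishes_to_order_Suc_imp_zero:
  assumes "vanishes_to_order U y (Suc k) f" "y \<in> U"
  shows "f y = 0"
proof -
  have "vanishes_to_order U y n f \<Longrightarrow> n = Suc k \<Longrightarrow> f y = 0" for n k
    by (induction arbitrary: k rule: vanishes_to_order.induct) (use assms(2) in auto)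
  then show ?thesis
    using assms(1) by blast
qed

lemma vanishes_to_order_mult_right:
  "vanishes_to_order U y k g \<Longrightarrow> sep_holomorphic_on c U \<Longrightarrow> (\<forall>x\<in>U. f x = g x * c x) \<Longrightarrow>
    vanishes_to_order U y k f"
proof (induction arbitrary: f rule: vanishes_to_order.induct)
  case (base g)
  then show ?case
    using sep_holomorphic_on_cong[OF sep_holomorphic_on_mult[of g U c] U]
    by (auto intro: vanishes_to_order.base)
next
  case (mult k g h f)
  have "vanishes_to_order U y k (\<lambda>x. g x * c x)"
    by (rule mult.IH) (use mult.prems in auto)
  then show ?case
    by (rule vanishes_to_order.mult[OF _ mult.hyps(2,3)]) (use mult.prems mult.hyps(4) in auto)
next
  case (add k f1 f2 f)
  have "vanishes_to_order U y (Suc k) (\<lambda>x. f1 x * c x)" "vanishes_to_order U y (Suc k) (\<lambda>x. f2 x * c x)"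
    using add.IH add.prems by auto
  then show ?case
    by (rule vanishes_to_order.add) (use add.prems add.hyps(3) in \<open>auto simp: distrib_right\<close>)
qed

lemma vanishes_to_order_add:
  assumes "vanishes_to_order U y k f1" "vanishes_to_order U y k f2" "\<forall>x\<in>U. f x = f1 x + f2 x"
  shows "vanishes_to_order U y k f"
proof (cases k)
  case 0
  then show ?thesis
    using assms sep_holomorphic_on_cong[OF sep_holomorphic_on_add[OF
        vanishes_to_order_imp_sep_holomorphic_on vanishes_to_order_imp_sep_holomorphic_on] U]
    by (auto intro: vanishes_to_order.base)
next
  case (Suc k')
  then show ?thesis
    using assms by (auto intro: vanishes_to_order.add)
qed

lemma vanishes_to_order_mult:
  "vanishes_to_order U y b g \<Longrightarrow> vanishes_to_order U y a f \<Longrightarrow>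
    vanishes_to_order U y (a + b) (\<lambda>x. f x * g x)"
proof (induction rule: vanishes_to_order.induct)
  case (base g)
  then show ?case
    using vanishes_to_order_mult_right[of a f g] by auto
next
  case (mult k g h g')
  have "vanishes_to_order U y (a + k) (\<lambda>x. f x * g x)"
    using mult.IH mult.prems by blast
  then have "vanishes_to_order U y (Suc (a + k)) (\<lambda>x. f x * g' x)"
    by (rule vanishes_to_order.mult[OF _ mult.hyps(2,3)]) (use mult.hyps(4) in simp)
  then show ?case
    by simp
next
  case (add k f1 f2 g)
  have "vanishes_to_order U y (Suc (a + k)) (\<lambda>x. f x * f1 x)"
    "vanishes_to_order U y (Suc (a + k)) (\<lambda>x. f x * f2 x)"
    using add.IH add.prems by auto
  then have "vanishes_to_order U y (Suc (a + k)) (\<lambda>x. f x * g x)"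
    by (rule vanishes_to_order.add) (use add.hyps(3) in \<open>simp add: distrib_left\<close>)
  then show ?case
    by simp
qed

lemma vanishes_to_order_power:
  assumes "sep_holomorphic_on h U" "h y = 0"
  shows "vanishes_to_order U y n (\<lambda>x. h x ^ n)"
proof (induction n)
  case 0
  show ?case
    using vanishes_to_order.base[OF sep_holomorphic_on_const[of 1 U]] by simp
next
  case (Suc n)
  have "vanishes_to_order U y 0 (\<lambda>x. 1)"
    by (rule vanishes_to_order.base[OF sep_holomorphic_on_const])
  then have "vanishes_to_order U y 1 h"
    using vanishes_to_order.mult[OF _ assms] by simp
  from vanishes_to_order_mult[OF this Suc.IH] show ?case
    by (simp add: mult.commute)
qed

lemma vanishes_to_order_cpartial:
  "vanishes_to_order U y (Suc k) f \<Longrightarrow> vanishes_to_order U y k (cpartial i f)"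
proof (induction k arbitrary: f)
  case 0
  then show ?case
    by (intro vanishes_to_order.base sep_holomorphic_on_cpartial U
        vanishes_to_order_imp_sep_holomorphic_on)
next
  case (Suc k)
  have "vanishes_to_order U y n f \<Longrightarrow> n = Suc (Suc k) \<Longrightarrow>
      vanishes_to_order U y (Suc k) (cpartial i f)" for n f
  proof (induction rule: vanishes_to_order.induct)
    case (mult k' g h f)
    then have g: "vanishes_to_order U y (Suc k) g"
      by simp
    have eq: "cpartial i f x = cpartial i g x * h x + g x * cpartial i h x" if "x \<in> U" for x
      using cpartial_cong[OF U that, of f "\<lambda>x. g x * h x"] mult.hyps(4) that
        cpartial_mult[OF vanishes_to_order_imp_sep_holomorphic_on[OF g] mult.hyps(2) that]
      by simp
    have "vanishes_to_order U y (Suc k) (\<lambda>x. cpartial i g x * h x)"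
      by (rule vanishes_to_order.mult[OF Suc.IH[OF g] mult.hyps(2,3)]) auto
    moreover have "vanishes_to_order U y (Suc k) (\<lambda>x. g x * cpartial i h x)"
      by (rule vanishes_to_order_mult_right[OF g sep_holomorphic_on_cpartial[OF U mult.hyps(2)]]) auto
    ultimately show ?case
      by (rule vanishes_to_order_add) (use eq in auto)
  next
    case (add k' f1 f2 f)
    have eq: "cpartial i f x = cpartial i f1 x + cpartial i f2 x" if "x \<in> U" for x
      using cpartial_cong[OF U that, of f "\<lambda>x. f1 x + f2 x"] add.hyps(3) that
        cpartial_add[OF vanishes_to_order_imp_sep_holomorphic_on[OF add.hyps(1)]
          vanishes_to_order_imp_sep_holomorphic_on[OF add.hyps(2)] that]
      by simp
    have "vanishes_to_order U y (Suc k) (cpartial i f1)" "vanishes_to_order U y (Suc k) (cpartial i f2)"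
      using add.IH add.prems by auto
    then show ?case
      by (rule vanishes_to_order_add) (use eq in auto)
  qed simp
  then show ?case
    using Suc.prems by blast
qed

lemma cpartials_eq_0_if_vanishes_to_order:
  assumes "vanishes_to_order U y n f" "length is < n" "y \<in> U"
  shows "cpartials is f y = 0"
proof -
  have "vanishes_to_order U y (n - length is) (cpartials is f)"
    using assms(2)
  proof (induction "is")
    case Nil
    then show ?case
      using assms(1) by (simp add: cpartials_def)
  next
    case (Cons i "is")
    then have "vanishes_to_order U y (Suc (n - length (i # is))) (cpartials is f)"
      by (simp add: Suc_diff_Suc)
    then show ?case
      by (auto simp: cpartials_def dest: vanishes_to_order_cpartial)
  qed
  moreover have "n - length is = Suc (n - length is - 1)"
    using assms(2) by simp
  ultimately show ?thesis
    using vanishes_to_order_Suc_imp_zero assms(3) by metis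
qed

end

section \<open>The Drury--Arveson space and its multipliers\<close>

definition DA_gram :: "(nat \<Rightarrow> complex) \<Rightarrow> (nat \<Rightarrow> complex ^ 'n) \<Rightarrow> nat \<Rightarrow> complex" where
  "DA_gram a w m = (\<Sum>i<m. \<Sum>j<m. a i * cnj (a j) * DA_kernel (w j) (w i))"

lemma DA_spaceE:
  assumes "f \<in> DA_space"
  obtains C where "\<And>m w a. (\<forall>i<m. w i \<in> unit_ball) \<Longrightarrow>
     (cmod (\<Sum>i<m. cnj (a i) * f (w i)))\<^sup>2 \<le> C * Re (DA_gram a w m)"
  using assms unfolding DA_space_def DA_gram_def by blast

lemma DA_spaceI:
  assumes "\<And>m w a. (\<forall>i<m. w i \<in> unit_ball) \<Longrightarrow>
     (cmod (\<Sum>i<m. cnj (a i) * f (w i)))\<^sup>2 \<le> C * Re (DA_gram a w m)"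
  shows "f \<in> DA_space"
  using assms unfolding DA_space_def DA_gram_def by blast

lemma norm_cinner_lt_1:
  fixes z w :: "complex ^ 'n"
  assumes "z \<in> unit_ball" "w \<in> unit_ball"
  shows "cmod (cinner z w) < 1"
proof -
  have "cmod (cinner z w) \<le> (\<Sum>i\<in>UNIV. cmod (z $ i * cnj (w $ i)))"
    unfolding cinner_def by (rule norm_sum)
  also have "\<dots> = (\<Sum>i\<in>UNIV. \<bar>cmod (z $ i)\<bar> * \<bar>cmod (w $ i)\<bar>)"
    by (simp add: norm_mult)
  also have "\<dots> \<le> L2_set (\<lambda>i. cmod (z $ i)) UNIV * L2_set (\<lambda>i. cmod (w $ i)) UNIV"
    by (rule L2_set_mult_ineq)
  also have "\<dots> = norm z * norm w" by (simp add: norm_vec_def)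
  also have "\<dots> \<le> norm z" using assms by (simp add: mult_left_le)
  also have "\<dots> < 1" using assms by simp
  finally show ?thesis .
qed

lemma DA_kernel_expand:
  assumes "z \<in> unit_ball" "w \<in> unit_ball"
  shows "DA_kernel z w = 1 + cinner z w * DA_kernel z w"
proof -
  have "cinner z w \<noteq> 1" using norm_cinner_lt_1[OF assms] by auto
  then show ?thesis unfolding DA_kernel_def by (simp add: field_simps)
qed

lemma gram_cinner_mult_eq_sum:
  fixes w :: "nat \<Rightarrow> complex ^ 'n"
  shows "(\<Sum>i<m. \<Sum>j<m. a i * cnj (a j) * (cinner (w j) (w i) * M j i)) =
         (\<Sum>k\<in>UNIV. \<Sum>i<m. \<Sum>j<m. (a i * cnj (w i $ k)) * cnj (a j * cnj (w j $ k)) * M j i)"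
proof -
  have inner: "(\<Sum>k\<in>UNIV. (a i * cnj (w i $ k)) * cnj (a j * cnj (w j $ k)) * M j i)
       = a i * cnj (a j) * (cinner (w j) (w i) * M j i)" for i j
    unfolding cinner_def sum_distrib_left sum_distrib_right by (rule sum.cong) (simp_all add: mult_ac)
  have "(\<Sum>k\<in>UNIV. \<Sum>i<m. \<Sum>j<m. (a i * cnj (w i $ k)) * cnj (a j * cnj (w j $ k)) * M j i)
      = (\<Sum>i<m. \<Sum>k\<in>UNIV. \<Sum>j<m. (a i * cnj (w i $ k)) * cnj (a j * cnj (w j $ k)) * M j i)"
    by (rule sum.swap)
  also have "\<dots> = (\<Sum>i<m. \<Sum>j<m. \<Sum>k\<in>UNIV. (a i * cnj (w i $ k)) * cnj (a j * cnj (w j $ k)) * M j i)"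
    by (intro sum.cong refl sum.swap)
  also have "\<dots> = (\<Sum>i<m. \<Sum>j<m. a i * cnj (a j) * (cinner (w j) (w i) * M j i))"
    by (intro sum.cong refl) (rule inner)
  finally show ?thesis by simp
qed

lemma sum_sum_mult_cnj: "(\<Sum>i\<in>A. \<Sum>j\<in>A. a i * cnj (a j)) = of_real ((cmod (\<Sum>i\<in>A. a i))\<^sup>2)"
proof -
  have "(\<Sum>i\<in>A. \<Sum>j\<in>A. a i * cnj (a j)) = (\<Sum>i\<in>A. a i) * cnj (\<Sum>j\<in>A. a j)"
    by (simp add: sum_product cnj_sum)
  also have "\<dots> = of_real ((cmod (\<Sum>i\<in>A. a i))\<^sup>2)"
    by (rule complex_norm_square[symmetric])
  finally show ?thesis .
qed

text \<open>Schur's product theorem for the powers of the inner product.\<close>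

lemma Re_gram_cinner_power_nonneg:
  fixes w :: "nat \<Rightarrow> complex ^ 'n"
  shows "Re (\<Sum>i<m. \<Sum>j<m. a i * cnj (a j) * cinner (w j) (w i) ^ n) \<ge> 0"
proof (induction n arbitrary: a)
  case 0
  have "(\<Sum>i<m. \<Sum>j<m. a i * cnj (a j) * cinner (w j) (w i) ^ 0) = (\<Sum>i<m. \<Sum>j<m. a i * cnj (a j))"
    by simp
  then show ?case
    by (simp only: sum_sum_mult_cnj Re_complex_of_real zero_le_power2)
next
  case (Suc n)
  have "(\<Sum>i<m. \<Sum>j<m. a i * cnj (a j) * cinner (w j) (w i) ^ Suc n)
      = (\<Sum>i<m. \<Sum>j<m. a i * cnj (a j) * (cinner (w j) (w i) * cinner (w j) (w i) ^ n))"
    by simp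
  also have "\<dots> = (\<Sum>k\<in>UNIV. \<Sum>i<m. \<Sum>j<m. (a i * cnj (w i $ k)) * cnj (a j * cnj (w j $ k)) * cinner (w j) (w i) ^ n)"
    by (rule gram_cinner_mult_eq_sum)
  finally have eq: "(\<Sum>i<m. \<Sum>j<m. a i * cnj (a j) * cinner (w j) (w i) ^ Suc n) = \<dots>" .
  have "Re (\<Sum>k\<in>UNIV. \<Sum>i<m. \<Sum>j<m. (a i * cnj (w i $ k)) * cnj (a j * cnj (w j $ k)) * cinner (w j) (w i) ^ n)
     = (\<Sum>k\<in>UNIV. Re (\<Sum>i<m. \<Sum>j<m. (a i * cnj (w i $ k)) * cnj (a j * cnj (w j $ k)) * cinner (w j) (w i) ^ n))"
    by (rule Re_sum)
  also have "\<dots> \<ge> 0"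
    by (intro sum_nonneg) (rule Suc.IH)
  finally show ?case unfolding eq .
qed

lemma Re_DA_gram_nonneg:
  fixes w :: "nat \<Rightarrow> complex ^ 'n"
  assumes "\<forall>i<m. w i \<in> unit_ball"
  shows "Re (DA_gram a w m) \<ge> 0"
proof -
  have s: "(\<lambda>n. a i * cnj (a j) * cinner (w j) (w i) ^ n) sums (a i * cnj (a j) * DA_kernel (w j) (w i))"
    if "i < m" "j < m" for i j
  proof -
    have "cmod (cinner (w j) (w i)) < 1" using assms that by (intro norm_cinner_lt_1) auto
    then have "(\<lambda>n. cinner (w j) (w i) ^ n) sums (1 / (1 - cinner (w j) (w i)))"
      by (rule geometric_sums)
    then show ?thesis unfolding DA_kernel_def by (rule sums_mult)
  qed
  have "(\<lambda>n. \<Sum>i<m. \<Sum>j<m. a i * cnj (a j) * cinner (w j) (w i) ^ n) sums DA_gram a w m"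
    unfolding DA_gram_def by (intro sums_sum) (use s in auto)
  then have "(\<lambda>n. Re (\<Sum>i<m. \<Sum>j<m. a i * cnj (a j) * cinner (w j) (w i) ^ n)) sums Re (DA_gram a w m)"
    by (rule sums_Re)
  define g where "g = (\<lambda>n. Re (\<Sum>i<m. \<Sum>j<m. a i * cnj (a j) * cinner (w j) (w i) ^ n))"
  have S: "g sums Re (DA_gram a w m)" unfolding g_def by fact
  have g0: "0 \<le> g n" for n unfolding g_def by (rule Re_gram_cinner_power_nonneg)
  have "0 \<le> suminf g" by (rule suminf_nonneg[OF sums_summable[OF S] g0])
  then show ?thesis using sums_unique[OF S] by simp
qed

lemma DA_gram_decompose:
  fixes w :: "nat \<Rightarrow> complex ^ 'n"
  assumes "\<forall>i<m. w i \<in> unit_ball"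
  shows "DA_gram a w m = of_real ((cmod (\<Sum>i<m. a i))\<^sup>2) + (\<Sum>k\<in>UNIV. DA_gram (\<lambda>i. a i * cnj (w i $ k)) w m)"
proof -
  have "DA_gram a w m = (\<Sum>i<m. \<Sum>j<m. a i * cnj (a j) * (1 + cinner (w j) (w i) * DA_kernel (w j) (w i)))"
    unfolding DA_gram_def using assms by (intro sum.cong refl) (simp add: DA_kernel_expand[symmetric])
  also have "\<dots> = (\<Sum>i<m. \<Sum>j<m. a i * cnj (a j)) +
                  (\<Sum>i<m. \<Sum>j<m. a i * cnj (a j) * (cinner (w j) (w i) * DA_kernel (w j) (w i)))"
    by (simp add: distrib_left sum.distrib)
  also have "(\<Sum>i<m. \<Sum>j<m. a i * cnj (a j) * (cinner (w j) (w i) * DA_kernel (w j) (w i)))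
       = (\<Sum>k\<in>UNIV. DA_gram (\<lambda>i. a i * cnj (w i $ k)) w m)"
    unfolding DA_gram_def by (rule gram_cinner_mult_eq_sum)
  finally show ?thesis
    by (simp only: sum_sum_mult_cnj)
qed

lemma DA_gram_eq_sum:
  fixes w :: "nat \<Rightarrow> complex ^ 'n"
  assumes "\<forall>i<m. w i \<in> unit_ball"
  shows "Re (DA_gram a w m) = (cmod (\<Sum>i<m. a i))\<^sup>2 + (\<Sum>k\<in>UNIV. Re (DA_gram (\<lambda>i. a i * cnj (w i $ k)) w m))"
  using arg_cong[OF DA_gram_decompose[OF assms, of a], of Re]
  by (simp only: Re_sum plus_complex.simps Re_complex_of_real)

lemma norm_sum_sq_le_DA_gram:
  fixes w :: "nat \<Rightarrow> complex ^ 'n"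
  assumes "\<forall>i<m. w i \<in> unit_ball"
  shows "(cmod (\<Sum>i<m. a i))\<^sup>2 \<le> Re (DA_gram a w m)"
proof -
  have "0 \<le> (\<Sum>k\<in>UNIV. Re (DA_gram (\<lambda>i. a i * cnj (w i $ k)) w m))"
    by (intro sum_nonneg Re_DA_gram_nonneg[OF assms])
  then show ?thesis
    unfolding DA_gram_eq_sum[OF assms, of a] by linarith
qed

lemma DA_gram_coordinate_le:
  fixes w :: "nat \<Rightarrow> complex ^ 'n"
  assumes "\<forall>i<m. w i \<in> unit_ball"
  shows "Re (DA_gram (\<lambda>i. a i * cnj (w i $ k)) w m) \<le> Re (DA_gram a w m)"
proof -
  have "Re (DA_gram (\<lambda>i. a i * cnj (w i $ k)) w m) \<le> (\<Sum>k\<in>UNIV. Re (DA_gram (\<lambda>i. a i * cnj (w i $ k)) w m))"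
    by (intro member_le_sum Re_DA_gram_nonneg[OF assms]) auto
  then show ?thesis
    unfolding DA_gram_eq_sum[OF assms, of a] using zero_le_power2[of "cmod (\<Sum>i<m. a i)"] by linarith
qed

lemma const_1_in_DA_space: "(\<lambda>x::complex ^ 'n. 1) \<in> DA_space"
proof (rule DA_spaceI[where C=1])
  fix m :: nat and w :: "nat \<Rightarrow> complex ^ 'n" and a :: "nat \<Rightarrow> complex"
  assume w: "\<forall>i<m. w i \<in> unit_ball"
  have "(cmod (\<Sum>i<m. cnj (a i) * 1))\<^sup>2 = (cmod (\<Sum>i<m. a i))\<^sup>2"
    by (simp flip: cnj_sum)
  also have "\<dots> \<le> Re (DA_gram a w m)" by (rule norm_sum_sq_le_DA_gram[OF w])
  finally show "(cmod (\<Sum>i<m. cnj (a i) * 1))\<^sup>2 \<le> 1 * Re (DA_gram a w m)" by simp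
qed

lemma DA_space_add:
  fixes f :: "complex ^ 'n \<Rightarrow> complex"
  assumes "f \<in> DA_space" "g \<in> DA_space"
  shows "(\<lambda>x. f x + g x) \<in> DA_space"
proof -
  obtain C1 where C1: "\<And>m w a. (\<forall>i<m. w i \<in> unit_ball) \<Longrightarrow>
     (cmod (\<Sum>i<m. cnj (a i) * f (w i)))\<^sup>2 \<le> C1 * Re (DA_gram a w m)" using DA_spaceE[OF assms(1)] by blast
  obtain C2 where C2: "\<And>m w a. (\<forall>i<m. w i \<in> unit_ball) \<Longrightarrow>
     (cmod (\<Sum>i<m. cnj (a i) * g (w i)))\<^sup>2 \<le> C2 * Re (DA_gram a w m)" using DA_spaceE[OF assms(2)] by blast
  show ?thesis
  proof (rule DA_spaceI[where C="2 * C1 + 2 * C2"])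
    fix m :: nat and w :: "nat \<Rightarrow> complex ^ 'n" and a :: "nat \<Rightarrow> complex"
    assume w: "\<forall>i<m. w i \<in> unit_ball"
    let ?u = "\<Sum>i<m. cnj (a i) * f (w i)" and ?v = "\<Sum>i<m. cnj (a i) * g (w i)"
    have e: "(\<Sum>i<m. cnj (a i) * (f (w i) + g (w i))) = ?u + ?v"
      by (simp add: distrib_left sum.distrib)
    have "(cmod (?u + ?v))\<^sup>2 \<le> (cmod ?u + cmod ?v)\<^sup>2"
      by (rule power_mono[OF norm_triangle_ineq]) simp
    also have "\<dots> \<le> 2 * (cmod ?u)\<^sup>2 + 2 * (cmod ?v)\<^sup>2"
      using zero_le_power2[of "cmod ?u - cmod ?v"] unfolding power2_diff power2_sum by linarith
    also have "\<dots> \<le> 2 * (C1 * Re (DA_gram a w m)) + 2 * (C2 * Re (DA_gram a w m))"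
      using C1[OF w, of a] C2[OF w, of a] by simp
    finally show "(cmod (\<Sum>i<m. cnj (a i) * (f (w i) + g (w i))))\<^sup>2 \<le> (2 * C1 + 2 * C2) * Re (DA_gram a w m)"
      unfolding e by (simp add: algebra_simps)
  qed
qed

lemma DA_space_cmult:
  fixes f :: "complex ^ 'n \<Rightarrow> complex"
  assumes "f \<in> DA_space"
  shows "(\<lambda>x. c * f x) \<in> DA_space"
proof -
  obtain C1 where C1: "\<And>m w a. (\<forall>i<m. w i \<in> unit_ball) \<Longrightarrow>
     (cmod (\<Sum>i<m. cnj (a i) * f (w i)))\<^sup>2 \<le> C1 * Re (DA_gram a w m)" using DA_spaceE[OF assms(1)] by blast
  show ?thesis
  proof (rule DA_spaceI[where C="(cmod c)\<^sup>2 * C1"])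
    fix m :: nat and w :: "nat \<Rightarrow> complex ^ 'n" and a :: "nat \<Rightarrow> complex"
    assume w: "\<forall>i<m. w i \<in> unit_ball"
    have e: "(\<Sum>i<m. cnj (a i) * (c * f (w i))) = c * (\<Sum>i<m. cnj (a i) * f (w i))"
      by (simp add: sum_distrib_left mult_ac)
    have "(cmod (c * (\<Sum>i<m. cnj (a i) * f (w i))))\<^sup>2 = (cmod c)\<^sup>2 * (cmod (\<Sum>i<m. cnj (a i) * f (w i)))\<^sup>2"
      by (simp add: norm_mult power_mult_distrib)
    also have "\<dots> \<le> (cmod c)\<^sup>2 * (C1 * Re (DA_gram a w m))"
      by (rule mult_left_mono[OF C1[OF w]]) simp
    finally show "(cmod (\<Sum>i<m. cnj (a i) * (c * f (w i))))\<^sup>2 \<le> (cmod c)\<^sup>2 * C1 * Re (DA_gram a w m)"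
      unfolding e by (simp add: mult.assoc)
  qed
qed

lemma DA_space_coordinate_mult:
  fixes f :: "complex ^ 'n \<Rightarrow> complex"
  assumes "f \<in> DA_space"
  shows "(\<lambda>x. x $ k * f x) \<in> DA_space"
proof -
  obtain C1 where C1: "\<And>m w a. (\<forall>i<m. w i \<in> unit_ball) \<Longrightarrow>
     (cmod (\<Sum>i<m. cnj (a i) * f (w i)))\<^sup>2 \<le> C1 * Re (DA_gram a w m)" using DA_spaceE[OF assms(1)] by blast
  show ?thesis
  proof (rule DA_spaceI[where C="max C1 0"])
    fix m :: nat and w :: "nat \<Rightarrow> complex ^ 'n" and a :: "nat \<Rightarrow> complex"
    assume w: "\<forall>i<m. w i \<in> unit_ball"
    let ?b = "\<lambda>i. a i * cnj (w i $ k)"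
    have e: "(\<Sum>i<m. cnj (a i) * (w i $ k * f (w i))) = (\<Sum>i<m. cnj (?b i) * f (w i))"
      by (simp add: mult_ac)
    have nb: "0 \<le> Re (DA_gram ?b w m)" by (rule Re_DA_gram_nonneg[OF w])
    have "(cmod (\<Sum>i<m. cnj (?b i) * f (w i)))\<^sup>2 \<le> C1 * Re (DA_gram ?b w m)" by (rule C1[OF w])
    also have "\<dots> \<le> max C1 0 * Re (DA_gram ?b w m)" by (rule mult_right_mono[OF _ nb]) simp
    also have "\<dots> \<le> max C1 0 * Re (DA_gram a w m)" by (rule mult_left_mono[OF DA_gram_coordinate_le[OF w]]) simp
    finally show "(cmod (\<Sum>i<m. cnj (a i) * (w i $ k * f (w i))))\<^sup>2 \<le> max C1 0 * Re (DA_gram a w m)"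
      unfolding e .
  qed
qed

lemma mult_DA_imp_DA_space: "\<phi> \<in> mult_DA \<Longrightarrow> \<phi> \<in> DA_space"
  using const_1_in_DA_space unfolding mult_DA_def by fastforce

lemma mult_DA_mult:
  fixes \<phi> \<psi> :: "complex ^ 'n \<Rightarrow> complex"
  assumes "\<phi> \<in> mult_DA" "\<psi> \<in> mult_DA"
  shows "(\<lambda>z. \<phi> z * \<psi> z) \<in> mult_DA"
  unfolding mult_DA_def mem_Collect_eq
proof (intro ballI)
  fix f :: "complex ^ 'n \<Rightarrow> complex" assume f: "f \<in> DA_space"
  have "(\<lambda>z. \<psi> z * f z) \<in> DA_space" using assms(2) f by (auto simp: mult_DA_def)
  then have "(\<lambda>z. \<phi> z * (\<psi> z * f z)) \<in> DA_space" using assms(1) by (auto simp: mult_DA_def)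
  then show "(\<lambda>z. \<phi> z * \<psi> z * f z) \<in> DA_space" by (simp add: mult.assoc)
qed

lemma mult_DA_add:
  fixes \<phi> \<psi> :: "complex ^ 'n \<Rightarrow> complex"
  assumes "\<phi> \<in> mult_DA" "\<psi> \<in> mult_DA"
  shows "(\<lambda>z. \<phi> z + \<psi> z) \<in> mult_DA"
  unfolding mult_DA_def mem_Collect_eq
proof (intro ballI)
  fix f :: "complex ^ 'n \<Rightarrow> complex" assume f: "f \<in> DA_space"
  have "(\<lambda>z. \<phi> z * f z + \<psi> z * f z) \<in> DA_space"
    by (rule DA_space_add) (use assms f in \<open>auto simp: mult_DA_def\<close>)
  then show "(\<lambda>z. (\<phi> z + \<psi> z) * f z) \<in> DA_space" by (simp add: distrib_right)
qed

lemma mult_DA_const: "(\<lambda>z. c) \<in> mult_DA"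
  unfolding mult_DA_def by (auto intro: DA_space_cmult)

lemma mult_DA_coordinate: "(\<lambda>z. z $ k) \<in> mult_DA"
  unfolding mult_DA_def by (auto intro: DA_space_coordinate_mult)

lemma mult_DA_diff:
  fixes \<phi> \<psi> :: "complex ^ 'n \<Rightarrow> complex"
  assumes "\<phi> \<in> mult_DA" "\<psi> \<in> mult_DA"
  shows "(\<lambda>z. \<phi> z - \<psi> z) \<in> mult_DA"
proof -
  have "(\<lambda>z. (-1) * \<psi> z) \<in> mult_DA" by (rule mult_DA_mult[OF mult_DA_const assms(2)])
  then have "(\<lambda>z. \<phi> z + (-1) * \<psi> z) \<in> mult_DA" by (rule mult_DA_add[OF assms(1)])
  then show ?thesis by simp
qed

lemma mult_DA_sum: "finite A \<Longrightarrow> (\<And>a. a \<in> A \<Longrightarrow> f a \<in> mult_DA) \<Longrightarrow> (\<lambda>z. \<Sum>a\<in>A. f a z) \<in> mult_DA"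
  by (induction A rule: finite_induct) (auto intro: mult_DA_const mult_DA_add)

lemma mult_DA_prod: "finite A \<Longrightarrow> (\<And>a. a \<in> A \<Longrightarrow> f a \<in> mult_DA) \<Longrightarrow> (\<lambda>z. \<Prod>a\<in>A. f a z) \<in> mult_DA"
  by (induction A rule: finite_induct) (auto intro: mult_DA_const mult_DA_mult)

lemma mult_DA_power: "\<phi> \<in> mult_DA \<Longrightarrow> (\<lambda>z. \<phi> z ^ n) \<in> mult_DA"
  by (induction n) (auto intro: mult_DA_const mult_DA_mult)


section \<open>Regularity of functions in the Drury--Arveson space\<close>

lemma cinner_add_axis:
  fixes y :: "complex ^ 'n"
  shows "cinner (y + axis i q) (y + axis i p) = cinner y y + q * cnj (y $ i) + y $ i * cnj p + q * cnj p"
proof -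
  have "(y + axis i q) $ j * cnj ((y + axis i p) $ j) =
      y $ j * cnj (y $ j) + (if j = i then q * cnj (y $ i) + y $ i * cnj p + q * cnj p else 0)" for j
    by (auto simp: axis_def algebra_simps)
  then show ?thesis
    unfolding cinner_def by (simp add: sum.distrib)
qed

lemma one_minus_cinner_neq_0: "z \<in> unit_ball \<Longrightarrow> w \<in> unit_ball \<Longrightarrow> 1 - cinner z w \<noteq> 0"
  using norm_cinner_lt_1 by fastforce

lemma add_axis_in_unit_ball:
  fixes y :: "complex ^ 'n"
  assumes "y \<in> unit_ball" "cmod p < 1 - norm y"
  shows "y + axis i p \<in> unit_ball"
  using norm_triangle_ineq[of y "axis i p"] assms by (simp add: norm_axis)

text \<open>With \<open>c = 1 - cinner y y\<close>, \<open>\<alpha> = cnj (y $ i)\<close> and \<open>\<beta> = y $ i\<close>, the kernel value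
  \<open>DA_kernel (y + axis i q) (y + axis i p)\<close> is \<open>1 / (c - \<sigma>\<alpha> - \<tau>\<beta> - \<sigma>\<tau>)\<close> for \<open>\<sigma> = q\<close>,
  \<open>\<tau> = cnj p\<close>. Its mixed second difference quotient in \<open>(\<sigma>, \<tau>)\<close> is the rational function
  \<open>mixed_quotient\<close>, which is continuous at \<open>(0, 0)\<close>.\<close>

definition mixed_quotient :: "complex \<Rightarrow> complex \<Rightarrow> complex \<Rightarrow> complex \<Rightarrow> complex \<Rightarrow> complex" where
  "mixed_quotient c \<alpha> \<beta> \<sigma> \<tau> = (\<alpha>*\<beta>*(c - \<sigma>*\<alpha>) + c*(c - \<sigma>*\<alpha>) + \<alpha>*(\<beta>+\<sigma>)*(c - \<tau>*\<beta>)) /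
      ((c - \<sigma>*\<alpha> - \<tau>*\<beta> - \<sigma>*\<tau>)*(c - \<tau>*\<beta>)*(c - \<sigma>*\<alpha>)*c)"

lemma mixed_quotient_eq:
  assumes "\<sigma> \<noteq> 0" "\<tau> \<noteq> 0" "c \<noteq> 0" "c - \<sigma>*\<alpha> \<noteq> 0" "c - \<tau>*\<beta> \<noteq> 0" "c - \<sigma>*\<alpha> - \<tau>*\<beta> - \<sigma>*\<tau> \<noteq> 0"
  shows "(1/(c - \<sigma>*\<alpha> - \<tau>*\<beta> - \<sigma>*\<tau>) - 1/(c - \<tau>*\<beta>) - 1/(c - \<sigma>*\<alpha>) + 1/c) / (\<tau> * \<sigma>) =
    mixed_quotient c \<alpha> \<beta> \<sigma> \<tau>"
proof -
  define E B A where "E = c - \<sigma>*\<alpha> - \<tau>*\<beta> - \<sigma>*\<tau>" and "B = c - \<tau>*\<beta>" and "A = c - \<sigma>*\<alpha>"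
  define N where "N = \<alpha>*\<beta>*A + c*A + \<alpha>*(\<beta>+\<sigma>)*B"
  have nz: "E \<noteq> 0" "B \<noteq> 0" "A \<noteq> 0"
    using assms by (auto simp: E_def B_def A_def)
  have "1/E - 1/B - 1/A + 1/c = (B*A*c - E*A*c - E*B*c + E*B*A) / (E*B*A*c)"
    using nz assms(3) by (simp add: field_simps)
  also have "B*A*c - E*A*c - E*B*c + E*B*A = \<sigma>*\<tau>*N"
    unfolding E_def B_def A_def N_def by algebra
  finally have "(1/E - 1/B - 1/A + 1/c) / (\<tau> * \<sigma>) = N / (E*B*A*c)"
    using assms(1,2) by (simp add: field_simps)
  then show ?thesis
    by (simp add: mixed_quotient_def E_def B_def A_def N_def)
qed

lemma isCont_mixed_quotient:
  assumes "c \<noteq> 0"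
  shows "isCont (\<lambda>z. mixed_quotient c \<alpha> \<beta> (fst z) (snd z)) (0, 0)"
  unfolding mixed_quotient_def using assms by (intro continuous_intros) simp_all

lemma mixed_quotient_near_0:
  assumes "c \<noteq> 0" "\<epsilon> > 0"
  obtains \<delta> where "\<delta> > 0"
    "\<And>\<sigma> \<tau>. cmod \<sigma> < \<delta> \<Longrightarrow> cmod \<tau> < \<delta> \<Longrightarrow>
      cmod (mixed_quotient c \<alpha> \<beta> \<sigma> \<tau> - mixed_quotient c \<alpha> \<beta> 0 0) < \<epsilon>"
proof -
  have "\<exists>\<delta>>0. \<forall>z. dist z (0, 0) < \<delta> \<longrightarrow>
      dist (mixed_quotient c \<alpha> \<beta> (fst z) (snd z)) (mixed_quotient c \<alpha> \<beta> 0 0) < \<epsilon>"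
    using isCont_mixed_quotient[OF assms(1)] assms(2) unfolding continuous_at_eps_delta by simp
  then obtain \<delta> where \<delta>: "\<delta> > 0" "\<And>z. dist z (0, 0) < \<delta> \<Longrightarrow>
      dist (mixed_quotient c \<alpha> \<beta> (fst z) (snd z)) (mixed_quotient c \<alpha> \<beta> 0 0) < \<epsilon>"
    by blast
  show ?thesis
  proof
    show "\<delta> / 2 > 0"
      using \<delta>(1) by simp
    fix \<sigma> \<tau> :: complex assume "cmod \<sigma> < \<delta> / 2" "cmod \<tau> < \<delta> / 2"
    then have "dist (\<sigma>, \<tau>) (0, 0) < \<delta>"
      using norm_Pair_le[of \<sigma> \<tau>] by (simp add: dist_norm)
    then show "cmod (mixed_quotient c \<alpha> \<beta> \<sigma> \<tau> - mixed_quotient c \<alpha> \<beta> 0 0) < \<epsilon>"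
      using \<delta>(2)[of "(\<sigma>, \<tau>)"] by (simp add: dist_norm)
  qed
qed

lemma DA_kernel_mixed_quotient:
  fixes y :: "complex ^ 'n"
  assumes y: "y \<in> unit_ball" and p: "cmod p < 1 - norm y" "p \<noteq> 0" and q: "cmod q < 1 - norm y" "q \<noteq> 0"
  shows "(DA_kernel (y + axis i q) (y + axis i p) - DA_kernel y (y + axis i p)
      - DA_kernel (y + axis i q) y + DA_kernel y y) / (cnj p * q) =
    mixed_quotient (1 - cinner y y) (cnj (y $ i)) (y $ i) q (cnj p)"
proof -
  define c where "c = 1 - cinner y y"
  define \<alpha> where "\<alpha> = cnj (y $ i)"
  define \<beta> where "\<beta> = y $ i"
  have yp: "y + axis i p \<in> unit_ball" and yq: "y + axis i q \<in> unit_ball"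
    using add_axis_in_unit_ball[OF y] p q by auto
  have e1: "1 - cinner (y + axis i q) (y + axis i p) = c - q*\<alpha> - cnj p*\<beta> - q*cnj p"
    unfolding c_def \<alpha>_def \<beta>_def cinner_add_axis by (simp add: algebra_simps)
  have e2: "1 - cinner y (y + axis i p) = c - cnj p*\<beta>"
    using cinner_add_axis[of y i 0 p] unfolding c_def \<beta>_def by (simp add: algebra_simps)
  have e3: "1 - cinner (y + axis i q) y = c - q*\<alpha>"
    using cinner_add_axis[of y i q 0] unfolding c_def \<alpha>_def by (simp add: algebra_simps)
  have "(1/(c - q*\<alpha> - cnj p*\<beta> - q*cnj p) - 1/(c - cnj p*\<beta>) - 1/(c - q*\<alpha>) + 1/c) / (cnj p * q)
      = mixed_quotient c \<alpha> \<beta> q (cnj p)"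
    using one_minus_cinner_neq_0[OF yq yp] one_minus_cinner_neq_0[OF y yp]
      one_minus_cinner_neq_0[OF yq y] one_minus_cinner_neq_0[OF y y] p q
    by (intro mixed_quotient_eq) (auto simp: e1 e2 e3 c_def)
  then show ?thesis
    unfolding DA_kernel_def e1 e2 e3 c_def[symmetric] \<alpha>_def[symmetric] \<beta>_def[symmetric]
    by (simp add: \<alpha>_def \<beta>_def)
qed

lemma norm_diff_diff_add_le:
  fixes a b c d :: "'a::real_normed_vector"
  shows "norm (a - b - c + d) \<le> norm a + norm b + norm c + norm d"
  using norm_triangle_ineq[of "a - b - c" d] norm_triangle_ineq4[of "a - b" c] norm_triangle_ineq4[of a b]
  by linarith

lemma DA_space_diff_quotient_bound:
  fixes y :: "complex ^ 'n" and f :: "complex ^ 'n \<Rightarrow> complex" and i :: 'n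
  assumes Cf: "\<And>m w a. (\<forall>i<m. w i \<in> unit_ball) \<Longrightarrow>
      (cmod (\<Sum>i<m. cnj (a i) * f (w i)))\<^sup>2 \<le> C * Re (DA_gram a w m)"
    and y: "y \<in> unit_ball" and t: "cmod t < 1 - norm y" "t \<noteq> 0" and s: "cmod s < 1 - norm y" "s \<noteq> 0"
  defines "R \<equiv> mixed_quotient (1 - cinner y y) (cnj (y $ i)) (y $ i)"
  shows "(cmod ((f (y + axis i t) - f y) / t - (f (y + axis i s) - f y) / s))\<^sup>2
    \<le> C * Re (R t (cnj t) - R s (cnj t) - R t (cnj s) + R s (cnj s))"
proof -
  define w where "w = (\<lambda>k::nat. if k = 0 then y + axis i t else if k = 1 then y else if k = 2 then y + axis i s else y)"
  define a where "a = (\<lambda>k::nat. if k = 0 then 1 / cnj t else if k = 1 then -1 / cnj t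
      else if k = 2 then -1 / cnj s else 1 / cnj s)"
  define G where "G = (\<lambda>p q. (DA_kernel (y + axis i q) (y + axis i p) - DA_kernel y (y + axis i p)
      - DA_kernel (y + axis i q) y + DA_kernel y y) / (cnj p * q))"
  have "(\<Sum>k<4. cnj (a k) * f (w k)) = (f (y + axis i t) - f y) / t - (f (y + axis i s) - f y) / s"
    using t s by (simp add: a_def w_def numeral_eq_Suc diff_divide_distrib)
  moreover have "DA_gram a w 4 = G t t - G t s - G s t + G s s"
    using t s by (simp add: DA_gram_def a_def w_def G_def numeral_eq_Suc field_simps)
  moreover have "G p q = R q (cnj p)" if "p \<in> {s, t}" "q \<in> {s, t}" for p q
    using DA_kernel_mixed_quotient[OF y] that t s by (auto simp: G_def R_def)
  moreover have "\<forall>k<4. w k \<in> unit_ball"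
    using add_axis_in_unit_ball[OF y] t s y by (auto simp: w_def)
  ultimately show ?thesis
    using Cf[of 4 w a] by simp
qed

text \<open>The difference quotients along a coordinate line form a Cauchy family: by
  \<open>DA_space_diff_quotient_bound\<close> their differences are controlled by a second difference of
  \<open>mixed_quotient\<close>, which tends to \<open>0\<close>.\<close>

lemma DA_space_line_differentiable:
  fixes f :: "complex ^ 'n \<Rightarrow> complex" and y :: "complex ^ 'n" and i :: 'n
  assumes "f \<in> DA_space" and y: "y \<in> unit_ball"
  shows "(\<lambda>t. f (y + axis i t)) field_differentiable (at 0)"
proof -
  obtain C where Cf: "\<And>m w a. (\<forall>i<m. w i \<in> unit_ball) \<Longrightarrow>
      (cmod (\<Sum>i<m. cnj (a i) * f (w i)))\<^sup>2 \<le> C * Re (DA_gram a w m)"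
    using DA_spaceE[OF assms(1)] by blast
  define R where "R = mixed_quotient (1 - cinner y y) (cnj (y $ i)) (y $ i)"
  define D where "D = (\<lambda>t. (f (y + axis i t) - f y) / t)"
  have "cauchy_filter (filtermap D (at 0))"
    unfolding cauchy_filter_metric_filtermap
  proof (intro allI impI)
    fix e :: real assume e: "e > 0"
    define \<epsilon> where "\<epsilon> = e\<^sup>2 / (4 * (\<bar>C\<bar> + 1))"
    have \<epsilon>: "\<epsilon> > 0"
      using e by (simp add: \<epsilon>_def)
    obtain \<delta> where \<delta>: "\<delta> > 0" "\<And>\<sigma> \<tau>. cmod \<sigma> < \<delta> \<Longrightarrow> cmod \<tau> < \<delta> \<Longrightarrow> cmod (R \<sigma> \<tau> - R 0 0) < \<epsilon>"
      unfolding R_def using mixed_quotient_near_0[OF one_minus_cinner_neq_0[OF y y] \<epsilon>] by blast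
    define d where "d = min \<delta> (1 - norm y)"
    have d: "d > 0"
      using \<delta> y by (simp add: d_def)
    show "\<exists>P. eventually P (at 0) \<and> (\<forall>t s. P t \<and> P s \<longrightarrow> dist (D t) (D s) < e)"
    proof (intro exI conjI allI impI)
      show "eventually (\<lambda>t. t \<noteq> 0 \<and> cmod t < d) (at (0::complex))"
        unfolding eventually_at using d by (auto intro!: exI[of _ d] simp: dist_norm)
      fix t s :: complex assume ts: "(t \<noteq> 0 \<and> cmod t < d) \<and> (s \<noteq> 0 \<and> cmod s < d)"
      define q where "q = R t (cnj t) - R s (cnj t) - R t (cnj s) + R s (cnj s)"
      have "(cmod (D t - D s))\<^sup>2 \<le> C * Re q"
        using DA_space_diff_quotient_bound[OF Cf y, of t s i] ts
        by (simp add: D_def q_def R_def d_def)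
      also have "\<dots> \<le> \<bar>C\<bar> * \<bar>Re q\<bar>"
        by (metis abs_ge_self abs_mult)
      also have "\<dots> \<le> \<bar>C\<bar> * cmod q"
        by (rule mult_left_mono[OF abs_Re_le_cmod]) simp
      also have "\<dots> \<le> \<bar>C\<bar> * (4 * \<epsilon>)"
      proof (intro mult_left_mono)
        have "q = (R t (cnj t) - R 0 0) - (R s (cnj t) - R 0 0) - (R t (cnj s) - R 0 0) + (R s (cnj s) - R 0 0)"
          by (simp add: q_def)
        also have "cmod \<dots> \<le> cmod (R t (cnj t) - R 0 0) + cmod (R s (cnj t) - R 0 0)
            + cmod (R t (cnj s) - R 0 0) + cmod (R s (cnj s) - R 0 0)"
          by (rule norm_diff_diff_add_le)
        also have "\<dots> \<le> 4 * \<epsilon>"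
          using \<delta>(2)[of t "cnj t"] \<delta>(2)[of s "cnj t"] \<delta>(2)[of t "cnj s"] \<delta>(2)[of s "cnj s"] ts
          by (simp add: d_def)
        finally show "cmod q \<le> 4 * \<epsilon>" .
      qed simp
      also have "\<dots> < e\<^sup>2"
        using \<epsilon> e by (simp add: \<epsilon>_def field_simps)
      finally show "dist (D t) (D s) < e"
        using e by (simp add: dist_norm power2_less_imp_less)
    qed
  qed
  then have "convergent_filter (filtermap D (at 0))"
    by (rule cauchy_filter_convergent)
  then obtain l where "filtermap D (at 0) \<le> nhds l"
    by (auto simp: convergent_filter_iff)
  then have "((\<lambda>t. f (y + axis i t)) has_field_derivative l) (at 0)"
    unfolding has_field_derivative_iff D_def by (simp add: filterlim_def)
  then show ?thesis
    by (auto simp: field_differentiable_def)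
qed

lemma tendsto_DA_kernel:
  fixes g h :: "'a \<Rightarrow> complex ^ 'n"
  assumes "(g \<longlongrightarrow> a) F" "(h \<longlongrightarrow> b) F" "1 - cinner a b \<noteq> 0"
  shows "((\<lambda>x. DA_kernel (g x) (h x)) \<longlongrightarrow> DA_kernel a b) F"
  using assms unfolding DA_kernel_def cinner_def by (intro tendsto_intros) auto

lemma DA_space_isCont:
  fixes f :: "complex ^ 'n \<Rightarrow> complex" and y :: "complex ^ 'n"
  assumes "f \<in> DA_space" and y: "y \<in> unit_ball"
  shows "isCont f y"
proof -
  obtain C where Cf: "\<And>m w a. (\<forall>i<m. w i \<in> unit_ball) \<Longrightarrow>
      (cmod (\<Sum>i<m. cnj (a i) * f (w i)))\<^sup>2 \<le> C * Re (DA_gram a w m)"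
    using DA_spaceE[OF assms(1)] by blast
  define g where "g = (\<lambda>x. C * Re (DA_kernel x x - DA_kernel y x - DA_kernel x y + DA_kernel y y))"
  have bound: "(cmod (f x - f y))\<^sup>2 \<le> g x" if x: "x \<in> unit_ball" for x
  proof -
    define w where "w = (\<lambda>k::nat. if k = 0 then x else y)"
    define a where "a = (\<lambda>k::nat. if k = 0 then (1::complex) else -1)"
    have "\<forall>k<2. w k \<in> unit_ball"
      using x y by (auto simp: w_def)
    moreover have "(\<Sum>k<2. cnj (a k) * f (w k)) = f x - f y"
      by (simp add: a_def w_def numeral_eq_Suc)
    moreover have "DA_gram a w 2 = DA_kernel x x - DA_kernel y x - DA_kernel x y + DA_kernel y y"
      by (simp add: DA_gram_def a_def w_def numeral_eq_Suc)
    ultimately show ?thesis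
      using Cf[of 2 w a] by (simp add: g_def)
  qed
  have "(g \<longlongrightarrow> C * Re (DA_kernel y y - DA_kernel y y - DA_kernel y y + DA_kernel y y)) (at y)"
    unfolding g_def using one_minus_cinner_neq_0[OF y y]
    by (intro tendsto_intros tendsto_DA_kernel) auto
  then have "(g \<longlongrightarrow> 0) (at y)"
    by simp
  from tendsto_real_sqrt[OF this] have "((\<lambda>x. sqrt (g x)) \<longlongrightarrow> 0) (at y)"
    by simp
  moreover have "eventually (\<lambda>x. norm (f x - f y) \<le> sqrt (g x)) (at y)"
    unfolding eventually_at_topological
  proof (intro exI[of _ unit_ball] conjI ballI impI)
    show "norm (f x - f y) \<le> sqrt (g x)" if "x \<in> unit_ball" for x
      using bound[OF that] by (intro real_le_rsqrt) simp
  qed (use y in auto)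
  ultimately have "((\<lambda>x. f x - f y) \<longlongrightarrow> 0) (at y)"
    by (rule Lim_null_comparison[rotated])
  then have "(f \<longlongrightarrow> f y) (at y)"
    by (rule LIM_zero_cancel)
  then show ?thesis
    by (simp add: isCont_def)
qed

lemma DA_space_sep_holomorphic_on:
  assumes "f \<in> DA_space"
  shows "sep_holomorphic_on f unit_ball"
  unfolding sep_holomorphic_on_def
proof (intro conjI ballI allI)
  show "continuous_on unit_ball f"
    using DA_space_isCont[OF assms] by (intro continuous_at_imp_continuous_on ballI)
  show "(\<lambda>t. f (y + axis i t)) field_differentiable at 0" if "y \<in> unit_ball" for y i
    using DA_space_line_differentiable[OF assms that] .
qed

lemma mult_DA_sep_holomorphic_on: "\<phi> \<in> mult_DA \<Longrightarrow> sep_holomorphic_on \<phi> unit_ball"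
  by (rule DA_space_sep_holomorphic_on[OF mult_DA_imp_DA_space])

section \<open>Polynomials\<close>

lemma monom_at_0_eq: "monom_at 0 \<alpha> x = (\<Prod>i\<in>UNIV. (x $ i) ^ \<alpha> i)"
  by (simp add: monom_at_def)

lemma is_poly_zero: "is_poly (\<lambda>x. 0)"
  unfolding is_poly_def by (intro exI[of _ "{}"]) auto

lemma is_poly_cong: "is_poly p \<Longrightarrow> (\<And>x. q x = p x) \<Longrightarrow> is_poly q"
  unfolding is_poly_def by auto

lemma is_poly_add:
  assumes "is_poly p" "is_poly q"
  shows "is_poly (\<lambda>x. p x + q x)"
proof -
  obtain A c where A: "finite A" "\<And>x. p x = (\<Sum>\<alpha>\<in>A. c \<alpha> * monom_at 0 \<alpha> x)"
    using assms(1) unfolding is_poly_def by blast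
  obtain B d where B: "finite B" "\<And>x. q x = (\<Sum>\<alpha>\<in>B. d \<alpha> * monom_at 0 \<alpha> x)"
    using assms(2) unfolding is_poly_def by blast
  define e where "e = (\<lambda>\<alpha>. (if \<alpha> \<in> A then c \<alpha> else 0) + (if \<alpha> \<in> B then d \<alpha> else 0))"
  have "(\<Sum>\<alpha>\<in>A \<union> B. e \<alpha> * monom_at 0 \<alpha> x) = p x + q x" for x
  proof -
    have pw: "e \<alpha> * monom_at 0 \<alpha> x = (if \<alpha> \<in> A then c \<alpha> * monom_at 0 \<alpha> x else 0)
              + (if \<alpha> \<in> B then d \<alpha> * monom_at 0 \<alpha> x else 0)" for \<alpha>
      by (auto simp: e_def distrib_right)
    have "(\<Sum>\<alpha>\<in>A \<union> B. e \<alpha> * monom_at 0 \<alpha> x) =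
          (\<Sum>\<alpha>\<in>A \<union> B. (if \<alpha> \<in> A then c \<alpha> * monom_at 0 \<alpha> x else 0)) +
          (\<Sum>\<alpha>\<in>A \<union> B. (if \<alpha> \<in> B then d \<alpha> * monom_at 0 \<alpha> x else 0))"
      by (simp only: pw sum.distrib)
    also have "(\<Sum>\<alpha>\<in>A \<union> B. (if \<alpha> \<in> A then c \<alpha> * monom_at 0 \<alpha> x else 0)) = p x"
      unfolding A(2) by (rule sum.mono_neutral_cong_right) (use A(1) B(1) in auto)
    also have "(\<Sum>\<alpha>\<in>A \<union> B. (if \<alpha> \<in> B then d \<alpha> * monom_at 0 \<alpha> x else 0)) = q x"
      unfolding B(2) by (rule sum.mono_neutral_cong_right) (use A(1) B(1) in auto)
    finally show ?thesis .
  qed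
  then show ?thesis unfolding is_poly_def using A(1) B(1) by (metis finite_UnI)
qed

lemma is_poly_cmult:
  assumes "is_poly p"
  shows "is_poly (\<lambda>x. a * p x)"
proof -
  obtain A c where A: "finite A" "\<And>x. p x = (\<Sum>\<alpha>\<in>A. c \<alpha> * monom_at 0 \<alpha> x)"
    using assms(1) unfolding is_poly_def by blast
  show ?thesis unfolding is_poly_def
    by (intro exI[of _ A] exI[of _ "\<lambda>\<alpha>. a * c \<alpha>"] conjI A(1) allI)
       (simp add: A(2) sum_distrib_left mult.assoc)
qed

lemma monom_at_0_Suc_upd: "monom_at 0 (\<alpha>(k := Suc (\<alpha> k))) x = x $ k * monom_at 0 \<alpha> x"
proof -
  have "(x $ i) ^ ((\<alpha>(k := Suc (\<alpha> k))) i) = (if i = k then x $ i else 1) * (x $ i) ^ \<alpha> i" for i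
    by auto
  then have "monom_at 0 (\<alpha>(k := Suc (\<alpha> k))) x = (\<Prod>i\<in>UNIV. (if i = k then x $ i else 1) * (x $ i) ^ \<alpha> i)"
    unfolding monom_at_0_eq by simp
  also have "\<dots> = x $ k * monom_at 0 \<alpha> x"
    unfolding prod.distrib monom_at_0_eq by (simp add: prod.delta)
  finally show ?thesis .
qed

lemma is_poly_coordinate_mult:
  fixes p :: "complex ^ 'n \<Rightarrow> complex"
  assumes "is_poly p"
  shows "is_poly (\<lambda>x. x $ k * p x)"
proof -
  obtain A c where A: "finite A" "\<And>x. p x = (\<Sum>\<alpha>\<in>A. c \<alpha> * monom_at 0 \<alpha> x)"
    using assms(1) unfolding is_poly_def by blast
  define sh where "sh = (\<lambda>\<alpha>::'n \<Rightarrow> nat. \<alpha>(k := Suc (\<alpha> k)))"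
  have inj: "inj_on sh A"
  proof
    fix \<alpha> \<beta> :: "'n \<Rightarrow> nat" assume eq: "sh \<alpha> = sh \<beta>"
    have "\<alpha> i = \<beta> i" for i
    proof -
      have "sh \<alpha> i = sh \<beta> i" using eq by simp
      then show ?thesis by (cases "i = k") (simp_all add: sh_def)
    qed
    then show "\<alpha> = \<beta>" by auto
  qed
  define d where "d = (\<lambda>\<beta>. c (the_inv_into A sh \<beta>))"
  have eqn: "(\<Sum>\<beta>\<in>sh ` A. d \<beta> * monom_at 0 \<beta> x) = x $ k * p x" for x
  proof -
    have "(\<Sum>\<beta>\<in>sh ` A. d \<beta> * monom_at 0 \<beta> x) = (\<Sum>\<alpha>\<in>A. d (sh \<alpha>) * monom_at 0 (sh \<alpha>) x)"
      by (rule sum.reindex[OF inj, unfolded comp_def])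
    also have "\<dots> = (\<Sum>\<alpha>\<in>A. c \<alpha> * (x $ k * monom_at 0 \<alpha> x))"
      by (intro sum.cong refl) (simp add: d_def the_inv_into_f_f[OF inj], simp add: sh_def monom_at_0_Suc_upd)
    also have "\<dots> = x $ k * (\<Sum>\<alpha>\<in>A. c \<alpha> * monom_at 0 \<alpha> x)"
      by (simp add: sum_distrib_left mult.left_commute)
    also have "\<dots> = x $ k * p x" by (simp only: A(2))
    finally show ?thesis .
  qed
  show ?thesis unfolding is_poly_def
    by (intro exI[of _ "sh ` A"] exI[of _ d] conjI finite_imageI A(1) allI) (simp add: eqn)
qed

lemma is_poly_linear_mult:
  fixes p :: "complex ^ 'n \<Rightarrow> complex"
  assumes "is_poly p"
  shows "is_poly (\<lambda>x. (x $ k - a) * p x)"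
  by (rule is_poly_cong[OF is_poly_add[OF is_poly_coordinate_mult[OF assms, of k] is_poly_cmult[OF assms, of "-a"]]])
     (simp add: algebra_simps)

lemma is_poly_linear_power_mult:
  fixes p :: "complex ^ 'n \<Rightarrow> complex"
  assumes "is_poly p"
  shows "is_poly (\<lambda>x. (x $ k - a) ^ n * p x)"
proof (induction n)
  case 0 then show ?case using assms by simp
next
  case (Suc n)
  show ?case by (rule is_poly_cong[OF is_poly_linear_mult[OF Suc, of k a]]) (simp add: mult.assoc)
qed

lemma is_poly_prod_power_mult:
  fixes p :: "complex ^ 'n \<Rightarrow> complex"
  assumes "is_poly p"
  shows "is_poly (\<lambda>x. (\<Prod>i\<in>S. (x $ i - z $ i) ^ \<beta> i) * p x)"
proof (induction S rule: finite_induct[OF finite])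
  case 1 then show ?case using assms by simp
next
  case (2 i S)
  show ?case by (rule is_poly_cong[OF is_poly_linear_power_mult[OF "2.IH", of i "z $ i" "\<beta> i"]])
    (use 2 in \<open>simp add: mult.assoc\<close>)
qed

lemma is_poly_sum: "finite B \<Longrightarrow> (\<And>b. b \<in> B \<Longrightarrow> is_poly (f b)) \<Longrightarrow> is_poly (\<lambda>x. \<Sum>b\<in>B. f b x)"
  by (induction B rule: finite_induct) (auto intro: is_poly_zero is_poly_add)

lemma maxideal_pow_is_poly:
  assumes "p \<in> maxideal_pow z k"
  shows "is_poly p"
proof -
  obtain B q where B: "finite B" "\<forall>\<beta>\<in>B. is_poly (q \<beta>)"
      "\<And>x. p x = (\<Sum>\<beta>\<in>B. q \<beta> x * monom_at z \<beta> x)"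
    using assms unfolding maxideal_pow_def by auto
  have "is_poly (\<lambda>x. q \<beta> x * monom_at z \<beta> x)" if "\<beta> \<in> B" for \<beta>
  proof -
    have "is_poly (\<lambda>x. (\<Prod>i\<in>UNIV. (x $ i - z $ i) ^ \<beta> i) * q \<beta> x)"
      using B(2) that by (intro is_poly_prod_power_mult) auto
    then show ?thesis
      by (rule is_poly_cong) (simp add: monom_at_def mult.commute)
  qed
  then have "is_poly (\<lambda>x. \<Sum>\<beta>\<in>B. q \<beta> x * monom_at z \<beta> x)"
    by (rule is_poly_sum[OF B(1)])
  then show ?thesis
    by (rule is_poly_cong) (rule B(3))
qed

lemma sep_holomorphic_on_monom_at: "sep_holomorphic_on (monom_at z \<beta>) U"
proof -
  have "sep_holomorphic_on (\<lambda>x. \<Prod>i\<in>UNIV. (x $ i - z $ i) ^ \<beta> i) U"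
    by (intro sep_holomorphic_on_prod sep_holomorphic_on_power sep_holomorphic_on_diff sep_holomorphic_on_coordinate sep_holomorphic_on_const) auto
  then show ?thesis by (simp add: monom_at_def[abs_def])
qed

lemma sep_holomorphic_on_poly:
  fixes p :: "complex ^ 'n \<Rightarrow> complex"
  assumes "is_poly p"
  shows "sep_holomorphic_on p U"
proof -
  obtain A c where A: "finite A" "\<And>x. p x = (\<Sum>\<alpha>\<in>A. c \<alpha> * monom_at 0 \<alpha> x)"
    using assms(1) unfolding is_poly_def by blast
  have "sep_holomorphic_on (\<lambda>x. \<Sum>\<alpha>\<in>A. c \<alpha> * monom_at 0 \<alpha> x) U"
    by (intro sep_holomorphic_on_sum sep_holomorphic_on_mult sep_holomorphic_on_const sep_holomorphic_on_monom_at A(1))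
  moreover have "p = (\<lambda>x. \<Sum>\<alpha>\<in>A. c \<alpha> * monom_at 0 \<alpha> x)" using A(2) by auto
  ultimately show ?thesis by simp
qed

lemma mult_DA_monom_at: "monom_at z \<beta> \<in> mult_DA"
proof -
  have "(\<lambda>x. \<Prod>i\<in>UNIV. (x $ i - z $ i) ^ \<beta> i) \<in> mult_DA"
    by (intro mult_DA_prod mult_DA_power mult_DA_diff mult_DA_coordinate mult_DA_const) auto
  then show ?thesis by (simp add: monom_at_def[abs_def])
qed

lemma vanishes_to_order_prod_power:
  fixes U :: "(complex ^ 'n) set" and z :: "complex ^ 'n"
  assumes U: "open U"
  shows "vanishes_to_order U z (\<Sum>i\<in>S. \<beta> i) (\<lambda>x::complex ^ 'n. \<Prod>i\<in>S. (x $ i - z $ i) ^ \<beta> i)"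
proof (induction S rule: finite_induct[OF finite])
  case 1 then show ?case using vanishes_to_order.base[OF sep_holomorphic_on_const[of 1 U]] by simp
next
  case (2 i S)
  have h: "sep_holomorphic_on (\<lambda>x::complex ^ 'n. x $ i - z $ i) U" by (intro sep_holomorphic_on_diff sep_holomorphic_on_coordinate sep_holomorphic_on_const)
  have "vanishes_to_order U z (\<beta> i + (\<Sum>i\<in>S. \<beta> i)) (\<lambda>x::complex ^ 'n. (x $ i - z $ i) ^ \<beta> i * (\<Prod>i\<in>S. (x $ i - z $ i) ^ \<beta> i))"
    by (rule vanishes_to_order_mult[OF U "2.IH" vanishes_to_order_power[OF U h]]) simp
  then show ?case using 2 by simp
qed

lemma vanishes_to_order_monom_at:
  fixes U :: "(complex ^ 'n) set" and z :: "complex ^ 'n"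
  assumes U: "open U"
  shows "vanishes_to_order U z (mdeg \<beta>) (monom_at z \<beta>)"
  using vanishes_to_order_prod_power[OF U, where z=z and S=UNIV and \<beta>=\<beta>] by (simp add: mdeg_def monom_at_def[abs_def])


section \<open>Interpolating sets\<close>

lemma islimpt_imp_halving_sequence:
  fixes z :: "'a::metric_space"
  assumes "z islimpt S"
  obtains s where "\<And>n. s n \<in> S" "\<And>n. s n \<noteq> z" "\<And>n. dist (s n) z \<le> (1/2) ^ n"
    "\<And>n. dist (s (Suc n)) z < dist (s n) z / 2"
proof -
  have "\<forall>r>0. \<exists>y\<in>S. y \<noteq> z \<and> dist y z < r"
    using assms by (auto simp: islimpt_approachable)
  then obtain pick where pick: "\<And>r. r > 0 \<Longrightarrow> pick r \<in> S \<and> pick r \<noteq> z \<and> dist (pick r) z < r"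
    by metis
  define s where "s = rec_nat (pick 1) (\<lambda>_ x. pick (dist x z / 2))"
  have s: "s n \<in> S \<and> s n \<noteq> z" for n
  proof (induction n)
    case 0
    then show ?case
      using pick[of 1] by (simp add: s_def)
  next
    case (Suc n)
    then show ?case
      using pick[of "dist (s n) z / 2"] by (simp add: s_def)
  qed
  have dist_Suc: "dist (s (Suc n)) z < dist (s n) z / 2" for n
    using pick[of "dist (s n) z / 2"] s[of n] by (simp add: s_def)
  have "dist (s n) z \<le> (1/2) ^ n" for n
  proof (induction n)
    case 0
    then show ?case
      using pick[of 1] by (simp add: s_def)
  next
    case (Suc n)
    then show ?case
      using dist_Suc[of n] by simp
  qed
  with s dist_Suc show ?thesis
    using that by blast
qed

lemma islimpt_split:
  fixes z :: "'a::metric_space"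
  assumes "z islimpt S"
  obtains A where "A \<subseteq> S" "z islimpt A" "z islimpt (S - A)"
proof -
  obtain s where s: "\<And>n. s n \<in> S" "\<And>n. s n \<noteq> z" and dist_le: "\<And>n. dist (s n) z \<le> (1/2) ^ n"
    and dist_Suc: "\<And>n. dist (s (Suc n)) z < dist (s n) z / 2"
    using islimpt_imp_halving_sequence[OF assms] by blast
  have dist_inj: "m = n" if "dist (s m) z = dist (s n) z" for m n
  proof (rule ccontr)
    have "dist (s (Suc k)) z < dist (s k) z" for k
      using dist_Suc[of k] zero_le_dist[of "s (Suc k)" z] by linarith
    then have "dist (s n') z < dist (s m') z" if "m' < n'" for m' n'
      using lift_Suc_mono_less[of "\<lambda>n. - dist (s n) z", OF _ that] by simp
    moreover assume "m \<noteq> n"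
    ultimately show False
      using that by (metis less_irrefl nat_neq_iff)
  qed
  have close: "\<exists>n. dist (s (2 * n + j)) z < e" if "e > 0" for e j
  proof -
    have "\<exists>n. (1/2::real) ^ n < e"
      using that by (intro real_arch_pow_inv) auto
    then obtain n where "(1/2::real) ^ n < e" ..
    moreover have "dist (s (2 * n + j)) z \<le> (1/2) ^ n"
      by (rule order_trans[OF dist_le power_decreasing]) auto
    ultimately show ?thesis
      by (meson le_less_trans)
  qed
  define A where "A = s ` {n. even n}"
  show ?thesis
  proof
    show "A \<subseteq> S"
      using s by (auto simp: A_def)
    show "z islimpt A"
      unfolding islimpt_approachable A_def
      using close[of _ 0] s by fastforce
    have "s (2 * n + 1) \<notin> A" for n
    proof
      assume "s (2 * n + 1) \<in> A"
      then obtain m where m: "even m" "s (2 * n + 1) = s m"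
        by (auto simp: A_def)
      then have "2 * n + 1 = m"
        using dist_inj[of "2 * n + 1" m] by simp
      with m(1) have "even (2 * n + 1)"
        by simp
      then show False
        by simp
    qed
    then show "z islimpt (S - A)"
      unfolding islimpt_approachable using close[of _ 1] s by fastforce
  qed
qed

lemma isCont_eq_if_islimpt:
  fixes f :: "'a::t2_space \<Rightarrow> 'b::t2_space"
  assumes "isCont f z" "z islimpt A" "\<And>x. x \<in> A \<Longrightarrow> f x = c"
  shows "f z = c"
proof (rule tendsto_unique[of "at z within A"])
  show "at z within A \<noteq> bot"
    using assms(2) by (simp add: trivial_limit_within)
  show "(f \<longlongrightarrow> f z) (at z within A)"
    using assms(1) by (simp add: isCont_def Lim_at_imp_Lim_at_within)
  have "eventually (\<lambda>x. f x = c) (at z within A)"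
    by (simp add: eventually_at_filter assms(3))
  then show "(f \<longlongrightarrow> c) (at z within A)"
    by (rule tendsto_eventually)
qed

text \<open>A multiplier is continuous on the ball, so it cannot take the values \<open>1\<close> and \<open>0\<close> on two
  parts of \<open>\<Lambda>\<close> accumulating at the same point.\<close>

lemma interpolating_not_islimpt:
  assumes "interpolating \<Lambda>" "z \<in> unit_ball"
  shows "\<not> z islimpt \<Lambda>"
proof
  assume "z islimpt \<Lambda>"
  then obtain A where A: "A \<subseteq> \<Lambda>" "z islimpt A" "z islimpt (\<Lambda> - A)"
    by (rule islimpt_split)
  define g where "g x = (if x \<in> A then 1 else 0 :: complex)" for x
  have "g ` \<Lambda> \<subseteq> {0, 1}"
    by (auto simp: g_def)
  then have "bounded (g ` \<Lambda>)"
    by (rule bounded_subset[rotated]) simp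
  then obtain \<phi> where \<phi>: "\<phi> \<in> mult_DA" "\<forall>y\<in>\<Lambda>. \<phi> y = g y"
    using assms(1) unfolding interpolating_def by blast
  have cont: "isCont \<phi> z"
    using sep_holomorphic_on_imp_continuous_on[OF mult_DA_sep_holomorphic_on[OF \<phi>(1)]]
    by (rule continuous_on_interior) (use assms(2) in simp)
  have "\<phi> z = 1"
    by (rule isCont_eq_if_islimpt[OF cont A(2)]) (use A(1) \<phi>(2) in \<open>auto simp: g_def\<close>)
  moreover have "\<phi> z = 0"
    by (rule isCont_eq_if_islimpt[OF cont A(3)]) (use \<phi>(2) in \<open>auto simp: g_def\<close>)
  ultimately show False
    by simp
qed

lemma interpolating_dist_bounded_below:
  assumes "interpolating \<Lambda>" "z \<in> unit_ball" "z \<notin> \<Lambda>"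
  obtains \<delta> where "\<delta> > 0" "\<And>y. y \<in> \<Lambda> \<Longrightarrow> \<delta> \<le> norm (y - z)"
  using interpolating_not_islimpt[OF assms(1,2)] assms(3)
  unfolding islimpt_approachable by (metis dist_norm not_le)

lemma norm_power2_eq_sum: "(norm (v :: 'a::real_normed_vector ^ 'n))\<^sup>2 = (\<Sum>k\<in>UNIV. (norm (v $ k))\<^sup>2)"
  unfolding norm_vec_def L2_set_def by (simp add: sum_nonneg)

text \<open>With \<open>\<Phi>\<^sub>k\<close> interpolating \<open>y \<mapsto> cnj (y\<^sub>k - z\<^sub>k) / \<parallel>y - z\<parallel>\<^sup>2\<close>, bounded because \<open>\<Lambda>\<close> stays
  away from \<open>z\<close>, the multiplier \<open>1 - \<Sum>\<^sub>k (x\<^sub>k - z\<^sub>k) \<Phi>\<^sub>k\<close> vanishes on \<open>\<Lambda>\<close>.\<close>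

lemma interpolating_separating_multiplier:
  assumes "interpolating \<Lambda>" "z \<in> unit_ball" "z \<notin> \<Lambda>"
  obtains \<psi> where "\<psi> \<in> mult_DA" "\<psi> z = 1" "\<And>y. y \<in> \<Lambda> \<Longrightarrow> \<psi> y = 0"
proof -
  obtain \<delta> where \<delta>: "\<delta> > 0" "\<And>y. y \<in> \<Lambda> \<Longrightarrow> \<delta> \<le> norm (y - z)"
    using interpolating_dist_bounded_below[OF assms] by blast
  define g where "g k y = cnj (y $ k - z $ k) / of_real ((norm (y - z))\<^sup>2)" for k y
  have "bounded (g k ` \<Lambda>)" for k
    unfolding bounded_iff
  proof (intro exI[of _ "1 / \<delta>"] ballI)
    fix u assume "u \<in> g k ` \<Lambda>"
    then obtain y where y: "y \<in> \<Lambda>" "u = g k y"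
      by blast
    have "cmod u = cmod (y $ k - z $ k) / (norm (y - z))\<^sup>2"
      by (simp add: y g_def norm_divide norm_power flip: complex_cnj_diff)
    also have "\<dots> \<le> norm (y - z) / (norm (y - z))\<^sup>2"
      using Finite_Cartesian_Product.norm_nth_le[of "y - z" k] by (intro divide_right_mono) simp_all
    also have "\<dots> = 1 / norm (y - z)"
      using \<delta>(1) \<delta>(2)[OF y(1)] by (simp add: power2_eq_square)
    also have "\<dots> \<le> 1 / \<delta>"
      using \<delta>(1) \<delta>(2)[OF y(1)] by (simp add: frac_le)
    finally show "norm u \<le> 1 / \<delta>"
      by simp
  qed
  then have "\<forall>k. \<exists>\<phi>\<in>mult_DA. \<forall>y\<in>\<Lambda>. \<phi> y = g k y"
    using assms(1) unfolding interpolating_def by blast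
  then obtain \<Phi> where \<Phi>: "\<And>k. \<Phi> k \<in> mult_DA" "\<And>k y. y \<in> \<Lambda> \<Longrightarrow> \<Phi> k y = g k y"
    by metis
  define \<psi> where "\<psi> x = 1 - (\<Sum>k\<in>UNIV. (x $ k - z $ k) * \<Phi> k x)" for x
  show ?thesis
  proof
    show "\<psi> \<in> mult_DA"
      unfolding \<psi>_def[abs_def]
      by (intro mult_DA_diff mult_DA_const mult_DA_sum mult_DA_mult mult_DA_coordinate \<Phi>(1)) auto
    show "\<psi> z = 1"
      by (simp add: \<psi>_def)
    fix y assume y: "y \<in> \<Lambda>"
    have "norm (y - z) > 0"
      using \<delta> y by force
    moreover have "(\<Sum>k\<in>UNIV. (y $ k - z $ k) * \<Phi> k y) =
        (\<Sum>k\<in>UNIV. (y - z) $ k * cnj ((y - z) $ k)) / of_real ((norm (y - z))\<^sup>2)"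
      unfolding sum_divide_distrib using \<Phi>(2)[OF y] by (simp add: g_def)
    moreover have "(\<Sum>k\<in>UNIV. (y - z) $ k * cnj ((y - z) $ k)) = of_real ((norm (y - z))\<^sup>2)"
      unfolding norm_power2_eq_sum of_real_sum by (intro sum.cong refl) (rule complex_norm_square[symmetric])
    ultimately show "\<psi> y = 0"
      by (simp add: \<psi>_def)
  qed
qed

section \<open>The polynomial order\<close>

lemma vanish_ideal_memI:
  assumes "\<Lambda> \<subseteq> unit_ball" "\<psi> \<in> mult_DA"
    and "\<And>y. y \<in> \<Lambda> \<Longrightarrow> vanishes_to_order unit_ball y (Suc \<kappa>) \<psi>"
  shows "\<psi> \<in> vanish_ideal \<kappa> \<Lambda>"
  unfolding vanish_ideal_def
  using assms by (auto intro!: cpartials_eq_0_if_vanishes_to_order[OF open_ball])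

lemma zero_set_ball_subset_interpolating:
  assumes "interpolating \<Lambda>" "vanish_ideal \<kappa> \<Lambda> \<subseteq> \<aa>"
  shows "zero_set_ball \<aa> \<subseteq> \<Lambda>"
proof
  fix z assume z: "z \<in> zero_set_ball \<aa>"
  show "z \<in> \<Lambda>"
  proof (rule ccontr)
    assume "z \<notin> \<Lambda>"
    moreover have "z \<in> unit_ball"
      using z by (simp add: zero_set_ball_def)
    ultimately obtain \<psi> where \<psi>: "\<psi> \<in> mult_DA" "\<psi> z = 1" "\<And>y. y \<in> \<Lambda> \<Longrightarrow> \<psi> y = 0"
      using interpolating_separating_multiplier[OF assms(1)] by blast
    have "(\<lambda>x. \<psi> x ^ Suc \<kappa>) \<in> vanish_ideal \<kappa> \<Lambda>"
      using assms(1) \<psi> unfolding interpolating_def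
      by (intro vanish_ideal_memI mult_DA_power vanishes_to_order_power mult_DA_sep_holomorphic_on) auto
    then have "(\<lambda>x. \<psi> x ^ Suc \<kappa>) \<in> \<aa>"
      using assms(2) by blast
    then show False
      using z \<psi>(2) unfolding zero_set_ball_def by auto
  qed
qed

lemma poly_germ_idealI:
  assumes "is_poly p" "open U" "z \<in> U" "finite B"
    and "\<And>\<beta>. \<beta> \<in> B \<Longrightarrow> F \<beta> \<in> \<aa> \<and> holo_on (G \<beta>) U"
    and "\<And>x. x \<in> U \<Longrightarrow> p x = (\<Sum>\<beta>\<in>B. G \<beta> x * F \<beta> x)"
  shows "p \<in> poly_germ_ideal \<aa> z"
proof -
  obtain e where e: "bij_betw e {..<card B} B"
    using ex_bij_betw_nat_finite[OF assms(4)] atLeast0LessThan by metis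
  then have "(\<Sum>i<card B. G (e i) x * F (e i) x) = (\<Sum>\<beta>\<in>B. G \<beta> x * F \<beta> x)" for x
    by (rule sum.reindex_bij_betw)
  moreover have "e i \<in> B" if "i < card B" for i
    using e that by (auto simp: bij_betw_def)
  ultimately show ?thesis
    unfolding poly_germ_ideal_def using assms
    by (intro CollectI conjI exI[of _ U] exI[of _ "card B"] exI[of _ "\<lambda>i. F (e i)"]
        exI[of _ "\<lambda>i. G (e i)"]) auto
qed

lemma maxideal_pow_subset_poly_germ_ideal:
  assumes "interpolating \<Lambda>" "vanish_ideal \<kappa> \<Lambda> \<subseteq> \<aa>" "z \<in> \<Lambda>"
  shows "maxideal_pow z (\<kappa> + 1) \<subseteq> poly_germ_ideal \<aa> z"
proof
  have \<Lambda>: "\<Lambda> \<subseteq> unit_ball"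
    using assms(1) by (simp add: interpolating_def)
  define g where "g y = (if y = z then 1 else 0 :: complex)" for y
  have "bounded (g ` \<Lambda>)"
    by (rule bounded_subset[of "{0, 1}"]) (auto simp: g_def)
  then obtain \<phi> where \<phi>: "\<phi> \<in> mult_DA" "\<forall>y\<in>\<Lambda>. \<phi> y = g y"
    using assms(1) unfolding interpolating_def by blast
  define h where "h x = \<phi> x ^ Suc \<kappa>" for x
  have hM: "h \<in> mult_DA"
    unfolding h_def[abs_def] by (rule mult_DA_power[OF \<phi>(1)])
  have h: "h \<in> mult_DA" "sep_holomorphic_on h unit_ball" "h z = 1"
    using hM mult_DA_sep_holomorphic_on[OF hM] \<phi>(2) assms(3) by (simp_all add: h_def g_def)
  define U where "U = {x \<in> unit_ball. h x \<noteq> 0}"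
  have U: "open U" "z \<in> U" "U \<subseteq> unit_ball"
    using continuous_open_preimage[OF sep_holomorphic_on_imp_continuous_on[OF h(2)] open_ball, of "-{0}"]
      h(3) \<Lambda> assms(3) by (auto simp: U_def vimage_def Int_def)
  fix p assume "p \<in> maxideal_pow z (\<kappa> + 1)"
  then obtain B q where B: "finite B" "\<forall>\<beta>\<in>B. mdeg \<beta> = \<kappa> + 1 \<and> is_poly (q \<beta>)"
      "\<forall>x. p x = (\<Sum>\<beta>\<in>B. q \<beta> x * monom_at z \<beta> x)"
    unfolding maxideal_pow_def by blast
  have vanishes: "vanishes_to_order unit_ball y (Suc \<kappa>) (\<lambda>x. monom_at z \<beta> x * h x)"
    if "\<beta> \<in> B" "y \<in> \<Lambda>" for \<beta> y
  proof (cases "y = z")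
    case True
    have "vanishes_to_order unit_ball z (Suc \<kappa>) (monom_at z \<beta>)"
      using vanishes_to_order_monom_at[OF open_ball, where z = z and \<beta> = \<beta>] B(2) that(1) by simp
    then show ?thesis
      unfolding True by (rule vanishes_to_order_mult_right[OF open_ball _ h(2)]) simp
  next
    case False
    then have "vanishes_to_order unit_ball y (Suc \<kappa>) h"
      using \<phi> that(2) unfolding h_def[abs_def]
      by (intro vanishes_to_order_power open_ball mult_DA_sep_holomorphic_on) (auto simp: g_def)
    then show ?thesis
      by (rule vanishes_to_order_mult_right[OF open_ball _ sep_holomorphic_on_monom_at[of z \<beta>]])
        (simp add: mult.commute)
  qed
  have "(\<lambda>x. monom_at z \<beta> x * h x) \<in> \<aa>" if "\<beta> \<in> B" for \<beta>
    using assms(2) vanish_ideal_memI[OF \<Lambda> mult_DA_mult[OF mult_DA_monom_at h(1)] vanishes[OF that]]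
    by blast
  moreover have "holo_on (\<lambda>x. q \<beta> x * inverse (h x)) U" if "\<beta> \<in> B" for \<beta>
  proof (rule sep_holomorphic_on_imp_holo_on[OF U(1) sep_holomorphic_on_mult])
    show "sep_holomorphic_on (q \<beta>) U"
      using B(2) that by (intro sep_holomorphic_on_poly) auto
    show "sep_holomorphic_on (\<lambda>x. inverse (h x)) U"
      by (rule sep_holomorphic_on_inverse[OF sep_holomorphic_on_subset[OF h(2) U(3)]]) (simp add: U_def)
  qed
  moreover have "p x = (\<Sum>\<beta>\<in>B. q \<beta> x * inverse (h x) * (monom_at z \<beta> x * h x))" if "x \<in> U" for x
    using that B(3) by (simp add: U_def field_simps)
  ultimately show "p \<in> poly_germ_ideal \<aa> z"
    using maxideal_pow_is_poly[OF \<open>p \<in> maxideal_pow z (\<kappa> + 1)\<close>] U(1,2) B(1)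
    by (intro poly_germ_idealI[where F = "\<lambda>\<beta> x. monom_at z \<beta> x * h x"
          and G = "\<lambda>\<beta> x. q \<beta> x * inverse (h x)"]) auto
qed

theorem lemma3p2:
  fixes \<Lambda> :: "(complex ^ 'n) set" and \<kappa> :: nat and \<aa> :: "(complex ^ 'n \<Rightarrow> complex) set"
  assumes "interpolating \<Lambda>"
    and "ideal_Md \<aa>"
    and "vanish_ideal \<kappa> \<Lambda> \<subseteq> \<aa>"
    and "z \<in> zero_set_ball \<aa>"
  shows "(\<exists>k. maxideal_pow z (k + 1) \<subseteq> poly_germ_ideal \<aa> z) \<and> poly_order \<aa> z \<le> \<kappa>"
proof -
  have "z \<in> \<Lambda>"
    using zero_set_ball_subset_interpolating[OF assms(1,3)] assms(4) by blast
  then have "maxideal_pow z (\<kappa> + 1) \<subseteq> poly_germ_ideal \<aa> z"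
    by (rule maxideal_pow_subset_poly_germ_ideal[OF assms(1,3)])
  then show ?thesis
    unfolding poly_order_def by (blast intro: Least_le)
qed

end
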